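(* Let $P$ be a distribution on $\mathcal{X}$, $R>0$, $K>0$, and let $\overline{P}_e^{(n)}$ be the random-coding average error probability (codebook letters i.i.d. $P$) of the maximum-likelihood decoder, averaged over messages, codebooks and channel instances. Then \[ \limsup_{n\to\infty} -\tfrac{1}{n}\log\overline{P}_e^{(n)}\le E_e(P,R,K),\qquad E_e(P,R,K)=\min_{TV}\Big\{D(TV\|PW)+\big|A_{TV}-R+|B_{TV}-K|^{+}\big|^{+}\Big\}. \]
   Context: Channel model: $\mathcal{X},\mathcal{Y}$ finite alphabets, $W(y|x)$ a fixed conditional distribution. A codebook of block length $n$ has $\lfloor e^{nR}\rfloor$ codewords $\mathbf{x}_m\in\mathcal{X}^n$. A channel instance: independently for each message $m$, a cloud of $\lfloor e^{nK}\rfloor$ independent sequences $\mathbf{y}\in\mathcal{Y}^n$ whose letters are independent with $y_i\sim W(\cdot|x_{m,i})$. Messages are equiprobable; when $m$ is sent, the output is a uniformly chosen vector of the cloud of $m$. The decoder knows codebook and clouds; the ML decoder outputs a message whose cloud contains the most copies of the received vector (ties broken at random). Logs are natural. $TV$ is a joint distribution on $\mathcal{Y}\times\mathcal{X}$ with $\mathcal{Y}$-marginal $T$ and conditional $V(x|y)$; $PW$ is $P(x)W(y|x)$; $D(TV\|PW)=\sum T(y)V(x|y)\log\frac{T(y)V(x|y)}{P(x)W(y|x)}$; $A_{TV}=\sum T(y)V(x|y)\log\frac{V(x|y)}{P(x)}$; $B_{TV}=\mathbb{E}_{TV}[-\log W(Y|X)]$; $|t|^{+}=\max\{0,t\}$.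 *)

theory Defs
  imports "HOL-Analysis.Analysis"
begin

definition seqs :: "nat \<Rightarrow> 'a list set" where
  "seqs n = {xs. length xs = n}"

definition seq_prob :: "('a \<Rightarrow> real) \<Rightarrow> 'a list \<Rightarrow> real" where
  "seq_prob P xs = (\<Prod>i<length xs. P (xs ! i))"

definition chan_prob :: "('x \<Rightarrow> 'y \<Rightarrow> real) \<Rightarrow> 'x list \<Rightarrow> 'y list \<Rightarrow> real" where
  "chan_prob W xs ys = (\<Prod>i<length xs. W (xs ! i) (ys ! i))"

text \<open>Number of codewords floor(e^(nR)) and cloud size floor(e^(nK)).\<close>
definition exp_size :: "nat \<Rightarrow> real \<Rightarrow> nat" where
  "exp_size n R = nat \<lfloor>exp (real n * R)\<rfloor>"

text \<open>Error probability of the ML decoder (random tie breaking) given the clouds Y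
  (Y m j = j-th vector of the cloud of message m, m < M, j < L), when message m is
  sent and the j-th vector of its cloud is output.\<close>
definition ml_error :: "nat \<Rightarrow> nat \<Rightarrow> (nat \<Rightarrow> nat \<Rightarrow> 'y list) \<Rightarrow> nat \<Rightarrow> nat \<Rightarrow> real" where
  "ml_error M L Y m j =
    (let y = Y m j;
         cnt = (\<lambda>m'. card {j'. j' < L \<and> Y m' j' = y});
         best = {m'. m' < M \<and> (\<forall>m''<M. cnt m'' \<le> cnt m')}
     in 1 - (if m \<in> best then 1 / real (card best) else 0))"

definition avg_error :: "('x \<Rightarrow> real) \<Rightarrow> ('x \<Rightarrow> 'y \<Rightarrow> real) \<Rightarrow> real \<Rightarrow> real \<Rightarrow> nat \<Rightarrow> real" where
  "avg_error P W R K n =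
    (let M = exp_size n R; L = exp_size n K in
     (\<Sum>C \<in> PiE {..<M} (\<lambda>_. seqs n).
      \<Sum>Y \<in> PiE {..<M} (\<lambda>_. PiE {..<L} (\<lambda>_. seqs n)).
        (\<Prod>m<M. seq_prob P (C m)) *
        (\<Prod>m<M. \<Prod>j<L. chan_prob W (C m) (Y m j)) *
        ((1 / real M) * (\<Sum>m<M. (1 / real L) * (\<Sum>j<L. ml_error M L Y m j)))))"

text \<open>Joint distributions TV on Y x X, absolutely continuous w.r.t. PW
  (others give D(TV||PW) = infinity and never attain the minimum).\<close>
definition joint_dists :: "('x \<Rightarrow> real) \<Rightarrow> ('x \<Rightarrow> 'y \<Rightarrow> real) \<Rightarrow> ('y \<times> 'x \<Rightarrow> real) set" where
  "joint_dists P W = {Q. (\<forall>p. 0 \<le> Q p) \<and> (\<Sum>p\<in>UNIV. Q p) = 1 \<and>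
                         (\<forall>y x. 0 < Q (y, x) \<longrightarrow> 0 < P x * W x y)}"

definition marg :: "('y \<times> 'x::finite \<Rightarrow> real) \<Rightarrow> 'y \<Rightarrow> real" where
  "marg Q y = (\<Sum>x\<in>UNIV. Q (y, x))"

definition condV :: "('y \<times> 'x::finite \<Rightarrow> real) \<Rightarrow> 'y \<Rightarrow> 'x \<Rightarrow> real" where
  "condV Q y x = Q (y, x) / marg Q y"

definition divg :: "('x \<Rightarrow> real) \<Rightarrow> ('x \<Rightarrow> 'y \<Rightarrow> real) \<Rightarrow> ('y::finite \<times> 'x::finite \<Rightarrow> real) \<Rightarrow> real" where
  "divg P W Q = (\<Sum>(y, x)\<in>UNIV. Q (y, x) * ln (Q (y, x) / (P x * W x y)))"

definition A_TV :: "('x \<Rightarrow> real) \<Rightarrow> ('y::finite \<times> 'x::finite \<Rightarrow> real) \<Rightarrow> real" where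
  "A_TV P Q = (\<Sum>(y, x)\<in>UNIV. Q (y, x) * ln (condV Q y x / P x))"

definition B_TV :: "('x \<Rightarrow> 'y \<Rightarrow> real) \<Rightarrow> ('y::finite \<times> 'x::finite \<Rightarrow> real) \<Rightarrow> real" where
  "B_TV W Q = (\<Sum>(y, x)\<in>UNIV. Q (y, x) * (- ln (W x y)))"

definition pos_part :: "real \<Rightarrow> real" where
  "pos_part t = max 0 t"

definition E_e :: "('x::finite \<Rightarrow> real) \<Rightarrow> ('x \<Rightarrow> 'y::finite \<Rightarrow> real) \<Rightarrow> real \<Rightarrow> real \<Rightarrow> real" where
  "E_e P W R K = Inf ((\<lambda>Q. divg P W Q + pos_part (A_TV P Q - R + pos_part (B_TV W Q - K)))
                      ` joint_dists P W)"

end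

theory Submission
  imports Defs "HOL-Combinatorics.Multiset_Permutations" "HOL-Real_Asymp.Real_Asymp"
begin

text \<open>
  If a received vector \<open>y\<close> occurs \<open>c\<^sub>m\<close> times in the cloud of message \<open>m\<close>, the ML decoder errs on
  at least \<open>(\<Sum>\<^sub>m c\<^sub>m) - max\<^sub>m c\<^sub>m\<close> of these occurrences, which is at least half the sum over \<open>a\<close> of
  \<open>min c\<^sub>a (\<Sum>\<^sub>m\<^sub>\<noteq>\<^sub>a c\<^sub>m)\<close>. Fix a joint type \<open>k\<close> of pairs (output letter, input letter). The minimum
  is bounded below by the number of pairs \<open>(b, \<beta>)\<close> such that the codewords of \<open>a\<close> and \<open>b\<close> lie in
  the conditional type class of \<open>y\<close>, both clouds contain \<open>y\<close> within the same block \<open>\<beta>\<close> of cloud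
  indices, and no other message of a fixed set \<open>J\<close> of \<open>N\<close> competitors has its codeword in that
  class and \<open>y\<close> in its cloud. This indicator is a product over the messages, so its expectation
  factors; choosing \<open>N\<close> and the block length well gives a lower bound on the average error
  probability in terms of the sizes and probabilities of type classes. Stirling's formula turns it
  into \<open>- ln P\<^sub>e / n \<le> D + |A - R + |B - K|\<^sup>+|\<^sup>+ + o(1)\<close> along types \<open>k\<close> converging to a given
  \<open>TV\<close>, and the bound for every \<open>TV\<close> gives the bound for the infimum \<open>E\<^sub>e\<close>.
\<close>

section \<open>Memoryless sequences and the random-coding ensemble\<close>

lemma mem_seqs_iff [simp]: "xs \<in> seqs n \<longleftrightarrow> length xs = n"
  by (simp add: seqs_def)

lemma finite_seqs [simp]: "finite (seqs n :: 'a::finite list set)"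
  unfolding seqs_def using finite_lists_length_eq[of "UNIV :: 'a set" n] by simp

lemma sum_seqs_prod_nth:
  fixes f :: "nat \<Rightarrow> 'a::finite \<Rightarrow> 'b::comm_semiring_1"
  shows "(\<Sum>ys\<in>seqs n. \<Prod>i<n. f i (ys ! i)) = (\<Prod>i<n. \<Sum>b\<in>UNIV. f i b)"
proof -
  have bij: "bij_betw (\<lambda>ys. restrict ((!) ys) {..<n}) (seqs n) (PiE {..<n} (\<lambda>_. UNIV))"
  proof (rule bij_betwI[where g = "\<lambda>g. map g [0..<n]"])
    show "map (restrict ((!) ys) {..<n}) [0..<n] = ys" if "ys \<in> seqs n" for ys
      using that by (auto simp: seqs_def intro: nth_equalityI)
    show "restrict ((!) (map g [0..<n])) {..<n} = g" if "g \<in> {..<n} \<rightarrow>\<^sub>E UNIV" for g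
      using that by (auto simp: PiE_def extensional_def fun_eq_iff)
  qed (auto simp: seqs_def)
  have "(\<Sum>ys\<in>seqs n. \<Prod>i<n. f i (ys ! i)) = (\<Sum>g\<in>PiE {..<n} (\<lambda>_. UNIV). \<Prod>i<n. f i (g i))"
    by (subst sum.reindex_bij_betw[OF bij, symmetric]) (auto intro!: sum.cong prod.cong)
  also have "\<dots> = (\<Prod>i<n. \<Sum>b\<in>UNIV. f i b)"
    by (subst prod_sum_PiE) auto
  finally show ?thesis .
qed

locale code_ensemble =
  fixes P :: "'x::finite \<Rightarrow> real" and W :: "'x \<Rightarrow> 'y::finite \<Rightarrow> real"
  assumes P_nonneg: "0 \<le> P x" and sum_P: "(\<Sum>x\<in>UNIV. P x) = 1"
    and W_nonneg: "0 \<le> W x y" and sum_W: "(\<Sum>y\<in>UNIV. W x y) = 1"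
begin

lemma W_le_1: "W x y \<le> 1"
  using member_le_sum[of y UNIV "W x"] W_nonneg sum_W[of x] by simp

lemma seq_prob_nonneg: "0 \<le> seq_prob P xs"
  unfolding seq_prob_def by (intro prod_nonneg) (simp add: P_nonneg)

lemma chan_prob_nonneg: "0 \<le> chan_prob W xs ys"
  unfolding chan_prob_def by (intro prod_nonneg) (simp add: W_nonneg)

lemma chan_prob_le_1: "chan_prob W xs ys \<le> 1"
  unfolding chan_prob_def by (intro prod_le_1) (simp_all add: W_nonneg W_le_1)

lemma sum_seq_prob: "(\<Sum>xs\<in>seqs n. seq_prob P xs) = 1"
proof -
  have "(\<Sum>xs\<in>seqs n. seq_prob P xs) = (\<Sum>xs\<in>seqs n. \<Prod>i<n. P (xs ! i))"
    by (rule sum.cong) (auto simp: seq_prob_def seqs_def)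
  thus ?thesis using sum_seqs_prod_nth[of "\<lambda>i b. P b" n] by (simp add: sum_P)
qed

lemma sum_chan_prob: "length xs = n \<Longrightarrow> (\<Sum>ys\<in>seqs n. chan_prob W xs ys) = 1"
  unfolding chan_prob_def using sum_seqs_prod_nth[of "\<lambda>i b. W (xs ! i) b" n] by (simp add: sum_W)

definition ensemble_expect ::
    "nat \<Rightarrow> nat \<Rightarrow> nat \<Rightarrow> ((nat \<Rightarrow> 'x list) \<Rightarrow> (nat \<Rightarrow> nat \<Rightarrow> 'y list) \<Rightarrow> real) \<Rightarrow> real" where
  "ensemble_expect n M L F =
    (\<Sum>C\<in>PiE {..<M} (\<lambda>_. seqs n). \<Sum>Y\<in>PiE {..<M} (\<lambda>_. PiE {..<L} (\<lambda>_. seqs n)).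
       (\<Prod>m<M. seq_prob P (C m)) * (\<Prod>m<M. \<Prod>j<L. chan_prob W (C m) (Y m j)) * F C Y)"

definition msg_expect :: "nat \<Rightarrow> nat \<Rightarrow> ('x list \<Rightarrow> (nat \<Rightarrow> 'y list) \<Rightarrow> real) \<Rightarrow> real" where
  "msg_expect n L \<phi> =
    (\<Sum>x\<in>seqs n. seq_prob P x * (\<Sum>c\<in>PiE {..<L} (\<lambda>_. seqs n). (\<Prod>j<L. chan_prob W x (c j)) * \<phi> x c))"

lemma avg_error_eq_ensemble_expect:
  "avg_error P W R K n =
    ensemble_expect n (exp_size n R) (exp_size n K)
      (\<lambda>C Y. (1 / real (exp_size n R)) * (\<Sum>m<exp_size n R.
                (1 / real (exp_size n K)) * (\<Sum>j<exp_size n K. ml_error (exp_size n R) (exp_size n K) Y m j)))"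
  unfolding avg_error_def ensemble_expect_def Let_def ..

lemma ensemble_expect_mono:
  assumes "\<And>C Y. C \<in> PiE {..<M} (\<lambda>_. seqs n) \<Longrightarrow> Y \<in> PiE {..<M} (\<lambda>_. PiE {..<L} (\<lambda>_. seqs n)) \<Longrightarrow>
             F C Y \<le> G C Y"
  shows "ensemble_expect n M L F \<le> ensemble_expect n M L G"
  unfolding ensemble_expect_def
  using assms seq_prob_nonneg chan_prob_nonneg
  by (intro sum_mono mult_left_mono) (auto intro!: mult_nonneg_nonneg prod_nonneg)

lemma ensemble_expect_sum:
  assumes "finite I"
  shows "ensemble_expect n M L (\<lambda>C Y. \<Sum>i\<in>I. F i C Y) = (\<Sum>i\<in>I. ensemble_expect n M L (F i))"
  unfolding ensemble_expect_def sum_distrib_left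
  by (subst sum.swap, subst (2) sum.swap) (rule refl)

lemma ensemble_expect_scale: "ensemble_expect n M L (\<lambda>C Y. a * F C Y) = a * ensemble_expect n M L F"
  unfolding ensemble_expect_def sum_distrib_left by (simp add: mult_ac)

text \<open>The codewords and clouds of different messages are independent.\<close>

lemma ensemble_expect_prod:
  "ensemble_expect n M L (\<lambda>C Y. \<Prod>m<M. \<phi> m (C m) (Y m)) = (\<Prod>m<M. msg_expect n L (\<phi> m))"
proof -
  have inner: "(\<Sum>Y\<in>PiE {..<M} (\<lambda>_. PiE {..<L} (\<lambda>_. seqs n)).
      (\<Prod>m<M. \<Prod>j<L. chan_prob W (C m) (Y m j)) * (\<Prod>m<M. \<phi> m (C m) (Y m)))
    = (\<Prod>m<M. \<Sum>c\<in>PiE {..<L} (\<lambda>_. seqs n). (\<Prod>j<L. chan_prob W (C m) (c j)) * \<phi> m (C m) c)" for C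
    by (subst prod_sum_PiE) (auto simp: prod.distrib intro!: finite_PiE)
  have "ensemble_expect n M L (\<lambda>C Y. \<Prod>m<M. \<phi> m (C m) (Y m))
      = (\<Sum>C\<in>PiE {..<M} (\<lambda>_. seqs n). (\<Prod>m<M. seq_prob P (C m)) *
           (\<Prod>m<M. \<Sum>c\<in>PiE {..<L} (\<lambda>_. seqs n). (\<Prod>j<L. chan_prob W (C m) (c j)) * \<phi> m (C m) c))"
    unfolding ensemble_expect_def by (simp add: mult.assoc sum_distrib_left inner[symmetric])
  also have "\<dots> = (\<Sum>C\<in>PiE {..<M} (\<lambda>_. seqs n). \<Prod>m<M. seq_prob P (C m) *
           (\<Sum>c\<in>PiE {..<L} (\<lambda>_. seqs n). (\<Prod>j<L. chan_prob W (C m) (c j)) * \<phi> m (C m) c))"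
    by (simp only: prod.distrib)
  also have "\<dots> = (\<Prod>m<M. msg_expect n L (\<phi> m))"
    unfolding msg_expect_def by (subst prod_sum_PiE) auto
  finally show ?thesis .
qed


lemma sum_clouds_prob:
  fixes L :: nat
  shows "length x = n \<Longrightarrow> (\<Sum>c\<in>PiE {..<L} (\<lambda>_. seqs n). \<Prod>j<L. chan_prob W x (c j)) = 1"
  by (subst prod_sum_PiE[symmetric]) (simp_all add: sum_chan_prob)

lemma cloud_avoids_prob:
  fixes G :: "nat set"
  assumes "length x = n" and "y \<in> seqs n" and "G \<subseteq> {..<L}"
  shows "(\<Sum>c\<in>PiE {..<L} (\<lambda>_. seqs n). (\<Prod>j<L. chan_prob W x (c j)) * of_bool (\<forall>j\<in>G. c j \<noteq> y))
      = (1 - chan_prob W x y) ^ card G"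
proof -
  have "of_bool (\<forall>j\<in>G. c j \<noteq> y) = (\<Prod>j<L. of_bool (j \<in> G \<longrightarrow> c j \<noteq> y) :: real)" for c :: "nat \<Rightarrow> 'y list"
    using assms(3) by (cases "\<forall>j\<in>G. c j \<noteq> y") (auto intro: prod_zero)
  hence "(\<Sum>c\<in>PiE {..<L} (\<lambda>_. seqs n). (\<Prod>j<L. chan_prob W x (c j)) * of_bool (\<forall>j\<in>G. c j \<noteq> y))
      = (\<Prod>j<L. \<Sum>y'\<in>seqs n. chan_prob W x y' * of_bool (j \<in> G \<longrightarrow> y' \<noteq> y))"
    by (subst prod_sum_PiE) (simp_all add: prod.distrib)
  also have "\<dots> = (\<Prod>j<L. if j \<in> G then 1 - chan_prob W x y else 1)"
  proof (rule prod.cong[OF refl])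
    fix j
    have "(\<Sum>y'\<in>seqs n. chan_prob W x y' * of_bool (y' \<noteq> y)) = (\<Sum>y'\<in>seqs n - {y}. chan_prob W x y')"
      by (simp add: of_bool_def if_distrib sum.If_cases Diff_eq Collect_neg_eq)
    also have "\<dots> = 1 - chan_prob W x y"
      using assms(2) sum_chan_prob[OF assms(1)] by (simp add: sum_diff1)
    finally have "(\<Sum>y'\<in>seqs n. chan_prob W x y' * of_bool (y' \<noteq> y)) = 1 - chan_prob W x y" .
    thus "(\<Sum>y'\<in>seqs n. chan_prob W x y' * of_bool (j \<in> G \<longrightarrow> y' \<noteq> y)) = (if j \<in> G then 1 - chan_prob W x y else 1)"
      using sum_chan_prob[OF assms(1)] by auto
  qed
  also have "\<dots> = (1 - chan_prob W x y) ^ card G"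
    using assms(3) by (simp add: prod.If_cases Int_absorb1)
  finally show ?thesis .
qed

lemma msg_expect_one: "msg_expect n L (\<lambda>_ _. 1) = 1"
proof -
  have "msg_expect n L (\<lambda>_ _. 1) = (\<Sum>x\<in>seqs n. seq_prob P x)"
    unfolding msg_expect_def by (intro sum.cong refl) (simp add: sum_clouds_prob)
  thus ?thesis by (simp add: sum_seq_prob)
qed

lemma msg_expect_one_minus: "msg_expect n L (\<lambda>x c. 1 - \<phi> x c) = 1 - msg_expect n L \<phi>"
proof -
  have "msg_expect n L (\<lambda>x c. 1 - \<phi> x c) = msg_expect n L (\<lambda>_ _. 1) - msg_expect n L \<phi>"
    unfolding msg_expect_def by (simp add: algebra_simps sum_subtractf sum_distrib_left)
  thus ?thesis by (simp add: msg_expect_one)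
qed

lemma cloud_hits_prob:
  fixes G :: "nat set"
  assumes "length x = n" and "y \<in> seqs n" and "G \<subseteq> {..<L}"
  shows "(\<Sum>c\<in>PiE {..<L} (\<lambda>_. seqs n). (\<Prod>j<L. chan_prob W x (c j)) * of_bool (\<exists>j\<in>G. c j = y))
      = 1 - (1 - chan_prob W x y) ^ card G"
proof -
  have "(\<Sum>c\<in>PiE {..<L} (\<lambda>_. seqs n). (\<Prod>j<L. chan_prob W x (c j)) * of_bool (\<exists>j\<in>G. c j = y))
      = (\<Sum>c\<in>PiE {..<L} (\<lambda>_. seqs n). (\<Prod>j<L. chan_prob W x (c j)))
        - (\<Sum>c\<in>PiE {..<L} (\<lambda>_. seqs n). (\<Prod>j<L. chan_prob W x (c j)) * of_bool (\<forall>j\<in>G. c j \<noteq> y))"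
    by (subst sum_subtractf[symmetric]) (intro sum.cong refl, simp add: algebra_simps)
  thus ?thesis using sum_clouds_prob[OF assms(1)] cloud_avoids_prob[OF assms] by simp
qed

lemma msg_expect_hits:
  fixes G :: "nat set" and \<pi> \<omega> :: real
  assumes "S \<subseteq> seqs n" and "y \<in> seqs n" and "G \<subseteq> {..<L}"
    and "\<forall>x\<in>S. seq_prob P x = \<pi> \<and> chan_prob W x y = \<omega>"
  shows "msg_expect n L (\<lambda>x c. of_bool (x \<in> S \<and> (\<exists>j\<in>G. c j = y))) = card S * \<pi> * (1 - (1 - \<omega>) ^ card G)"
proof -
  have "msg_expect n L (\<lambda>x c. of_bool (x \<in> S \<and> (\<exists>j\<in>G. c j = y)))
      = (\<Sum>x\<in>seqs n. if x \<in> S then seq_prob P x * (1 - (1 - chan_prob W x y) ^ card G) else 0)"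
    unfolding msg_expect_def
  proof (intro sum.cong refl)
    fix x :: "'x list" assume "x \<in> seqs n"
    thus "seq_prob P x * (\<Sum>c\<in>PiE {..<L} (\<lambda>_. seqs n). (\<Prod>j<L. chan_prob W x (c j)) * of_bool (x \<in> S \<and> (\<exists>j\<in>G. c j = y)))
        = (if x \<in> S then seq_prob P x * (1 - (1 - chan_prob W x y) ^ card G) else 0)"
      using cloud_hits_prob[of x n y G L] assms(2,3) by simp
  qed
  also have "\<dots> = (\<Sum>x\<in>S. \<pi> * (1 - (1 - \<omega>) ^ card G))"
    using assms(1,4) by (simp add: sum.If_cases Int_absorb1)
  finally show ?thesis by simp
qed

end

section \<open>ML errors from colliding clouds\<close>

definition cloud_count :: "nat \<Rightarrow> (nat \<Rightarrow> nat \<Rightarrow> 'y list) \<Rightarrow> nat \<Rightarrow> 'y list \<Rightarrow> nat" where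
  "cloud_count L Y m y = card {j. j < L \<and> Y m j = y}"

lemma cloud_count_pos_iff: "0 < cloud_count L Y m y \<longleftrightarrow> (\<exists>j<L. Y m j = y)"
proof -
  have "finite {j. j < L \<and> Y m j = y}" by (rule finite_subset[of _ "{..<L}"]) auto
  thus ?thesis unfolding cloud_count_def by (auto simp: card_gt_0_iff)
qed

text \<open>Ties are broken uniformly among the messages of maximal count \<open>c\<close>, so the right-hand side is
  the total count minus the maximal one.\<close>

lemma tie_break_loss_ge:
  fixes c :: "nat \<Rightarrow> nat"
  assumes "M \<ge> 1"
  defines "best \<equiv> {m. m < M \<and> (\<forall>m'<M. c m' \<le> c m)}"
  shows "(1/2) * (\<Sum>a<M. min (real (c a)) (\<Sum>m\<in>{..<M}-{a}. real (c m)))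
         \<le> (\<Sum>m<M. real (c m) * (1 - (if m \<in> best then 1 / real (card best) else 0)))"
proof -
  obtain ms where ms: "ms < M" "\<forall>m<M. c m \<le> c ms"
  proof -
    have "Max (c ` {..<M}) \<in> c ` {..<M}" using assms(1) by (intro Max_in) (auto simp: lessThan_empty_iff)
    then obtain ms where "ms < M" "c ms = Max (c ` {..<M})" by auto
    moreover have "\<forall>m<M. c m \<le> Max (c ` {..<M})" by auto
    ultimately show ?thesis using that by auto
  qed
  have msb: "ms \<in> best" and bsub: "best \<subseteq> {..<M}" using ms unfolding best_def by auto
  hence cb: "card best \<ge> 1" by (metis One_nat_def Suc_leI card_gt_0_iff empty_iff finite_lessThan finite_subset)
  have cbest: "m \<in> best \<Longrightarrow> c m = c ms" for m using ms unfolding best_def by (auto intro: antisym)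
  define tot where "tot = (\<Sum>m<M. real (c m))"
  have "(\<Sum>m<M. if m \<in> best then real (c m) / real (card best) else 0) = (\<Sum>m\<in>best. real (c ms) / real (card best))"
    using bsub by (subst sum.If_cases) (auto simp: Int_absorb1 cbest intro!: sum.cong)
  also have "\<dots> = real (c ms)" using cb by simp
  finally have best_part: "(\<Sum>m<M. if m \<in> best then real (c m) / real (card best) else 0) = real (c ms)" .
  have "(\<Sum>m<M. real (c m) * (1 - (if m \<in> best then 1 / real (card best) else 0)))
      = tot - (\<Sum>m<M. if m \<in> best then real (c m) / real (card best) else 0)"
    unfolding tot_def by (subst sum_subtractf[symmetric]) (auto intro!: sum.cong simp: algebra_simps)
  hence loss: "(\<Sum>m<M. real (c m) * (1 - (if m \<in> best then 1 / real (card best) else 0))) = tot - real (c ms)"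
    using best_part by simp
  have rest: "a < M \<Longrightarrow> (\<Sum>m\<in>{..<M}-{a}. real (c m)) = tot - real (c a)" for a
    unfolding tot_def by (subst sum_diff1) auto
  have "(\<Sum>a<M. min (real (c a)) (\<Sum>m\<in>{..<M}-{a}. real (c m)))
      \<le> (\<Sum>a<M. if a = ms then tot - real (c ms) else real (c a))"
    by (rule sum_mono) (auto simp: rest)
  also have "\<dots> = (tot - real (c ms)) + (\<Sum>a\<in>{..<M}-{ms}. real (c a))"
    using ms(1) by (subst sum.remove[of _ ms]) (auto intro!: sum.cong)
  also have "\<dots> = 2 * (tot - real (c ms))" using rest[OF ms(1)] by simp
  finally show ?thesis using loss by simp
qed

lemma sum_ml_error_ge:
  assumes "M \<ge> 1" and "finite Ys" and "\<forall>m<M. \<forall>j<L. Y m j \<in> Ys"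
  shows "(1/2) * (\<Sum>a<M. \<Sum>y\<in>Ys. min (real (cloud_count L Y a y)) (\<Sum>m\<in>{..<M}-{a}. real (cloud_count L Y m y)))
         \<le> (\<Sum>m<M. \<Sum>j<L. ml_error M L Y m j)"
proof -
  define best where "best y = {m. m < M \<and> (\<forall>m'<M. cloud_count L Y m' y \<le> cloud_count L Y m y)}" for y
  define e where "e y m = 1 - (if m \<in> best y then 1 / real (card (best y)) else 0)" for y m
  have "(\<Sum>j<L. ml_error M L Y m j) = (\<Sum>y\<in>Ys. real (cloud_count L Y m y) * e y m)" if "m < M" for m
  proof -
    have "(\<Sum>j<L. ml_error M L Y m j) = (\<Sum>y\<in>Ys. \<Sum>j\<in>{j\<in>{..<L}. Y m j = y}. e (Y m j) m)"
      unfolding ml_error_def Let_def e_def best_def cloud_count_def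
      by (rule sum.group[symmetric]) (use assms that in auto)
    also have "\<dots> = (\<Sum>y\<in>Ys. real (cloud_count L Y m y) * e y m)"
      unfolding cloud_count_def by (intro sum.cong refl) (simp add: Collect_conj_eq lessThan_def Int_commute)
    finally show ?thesis .
  qed
  hence "(\<Sum>m<M. \<Sum>j<L. ml_error M L Y m j) = (\<Sum>y\<in>Ys. \<Sum>m<M. real (cloud_count L Y m y) * e y m)"
    by (subst sum.swap) (intro sum.cong refl, simp)
  also have "\<dots> \<ge> (\<Sum>y\<in>Ys. (1/2) * (\<Sum>a<M. min (real (cloud_count L Y a y)) (\<Sum>m\<in>{..<M}-{a}. real (cloud_count L Y m y))))"
    unfolding e_def best_def by (intro sum_mono tie_break_loss_ge assms(1))
  finally show ?thesis by (simp add: sum_distrib_left sum.swap[of _ Ys])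
qed

text \<open>At most one term of the sum survives.\<close>

lemma sum_unique_hit_le_min:
  fixes d :: "nat \<Rightarrow> nat" and u :: real
  assumes "finite J" and "0 \<le> u"
  shows "(\<Sum>b\<in>J. of_bool (A b) * min u (real (d b)) * (\<Prod>m\<in>J-{b}. 1 - of_bool (A m \<and> 0 < d m)))
         \<le> min u (\<Sum>m\<in>J. real (d m))"
proof -
  define t where "t b = of_bool (A b) * min u (real (d b)) * (\<Prod>m\<in>J-{b}. 1 - of_bool (A m \<and> 0 < d m))" for b
  have t0: "t b = 0" if "\<not> (A b \<and> 0 < d b)" for b
    using that assms(2) unfolding t_def by auto
  have bound: "0 \<le> min u (\<Sum>m\<in>J. real (d m))" using assms(2) by (simp add: sum_nonneg)
  show ?thesis
  proof (cases "\<exists>b0\<in>J. A b0 \<and> 0 < d b0")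
    case False
    hence "(\<Sum>b\<in>J. t b) = 0" using t0 by (intro sum.neutral) auto
    thus ?thesis using bound unfolding t_def by simp
  next
    case True
    then obtain b0 where b0: "b0 \<in> J" "A b0" "0 < d b0" by blast
    have "t b = 0" if "b \<in> J" "b \<noteq> b0" for b
    proof (cases "A b \<and> 0 < d b")
      case True
      have "(\<Prod>m\<in>J-{b}. 1 - of_bool (A m \<and> 0 < d m) :: real) = 0"
        using b0 that assms(1) by (intro prod_zero) auto
      thus ?thesis unfolding t_def by simp
    qed (use t0 in auto)
    hence "(\<Sum>b\<in>J. t b) = t b0"
      using assms(1) b0(1) by (subst sum.remove[of _ b0]) (auto intro: sum.neutral)
    also have "t b0 = min u (real (d b0)) * (\<Prod>m\<in>J-{b0}. 1 - of_bool (A m \<and> 0 < d m))"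
      unfolding t_def using b0(2) by simp
    also have "\<dots> \<le> min u (real (d b0))"
      using assms(2) by (intro mult_left_le prod_le_1) auto
    also have "\<dots> \<le> min u (\<Sum>m\<in>J. real (d m))"
      using b0(1) assms(1) by (intro min.mono order.refl member_le_sum) auto
    finally show ?thesis unfolding t_def .
  qed
qed

lemma sum_blocks_le_card:
  fixes Bn L' L :: nat
  assumes "Bn * L' \<le> L"
  shows "(\<Sum>\<beta><Bn. of_bool (\<exists>j\<in>{\<beta>*L'..<\<beta>*L'+L'}. A j)) \<le> real (card {j. j < L \<and> A j})"
proof -
  have "(\<Sum>\<beta><Bn. of_bool (\<exists>j\<in>{\<beta>*L'..<\<beta>*L'+L'}. A j)) \<le> (\<Sum>\<beta><Bn. \<Sum>j\<in>{\<beta>*L'..<\<beta>*L'+L'}. of_bool (A j) :: real)"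
  proof (rule sum_mono)
    fix \<beta>
    show "of_bool (\<exists>j\<in>{\<beta>*L'..<\<beta>*L'+L'}. A j) \<le> (\<Sum>j\<in>{\<beta>*L'..<\<beta>*L'+L'}. of_bool (A j) :: real)"
    proof (cases "\<exists>j\<in>{\<beta>*L'..<\<beta>*L'+L'}. A j")
      case True
      then obtain j where j: "j \<in> {\<beta>*L'..<\<beta>*L'+L'}" "A j" by auto
      have "of_bool (A j) \<le> (\<Sum>j\<in>{\<beta>*L'..<\<beta>*L'+L'}. of_bool (A j) :: real)"
        using j(1) by (intro member_le_sum) auto
      thus ?thesis using True j(2) by simp
    qed (simp add: sum_nonneg)
  qed
  also have "\<dots> = (\<Sum>j<Bn*L'. of_bool (A j))" by (rule sum.nat_group)
  also have "\<dots> \<le> (\<Sum>j<L. of_bool (A j))" using assms by (intro sum_mono2) auto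
  also have "\<dots> = real (card {j. j < L \<and> A j})"
    by (simp add: of_bool_def sum.If_cases lessThan_def Collect_conj_eq)
  finally show ?thesis .
qed

lemma sum_blocks_both_le_min:
  fixes Bn L' L :: nat
  assumes "Bn * L' \<le> L"
  shows "(\<Sum>\<beta><Bn. of_bool (\<exists>j\<in>{\<beta>*L'..<\<beta>*L'+L'}. A j) * of_bool (\<exists>j\<in>{\<beta>*L'..<\<beta>*L'+L'}. B j))
         \<le> min (real (card {j. j < L \<and> A j})) (real (card {j. j < L \<and> B j}))"
proof -
  have "(\<Sum>\<beta><Bn. of_bool (\<exists>j\<in>{\<beta>*L'..<\<beta>*L'+L'}. A j) * of_bool (\<exists>j\<in>{\<beta>*L'..<\<beta>*L'+L'}. B j))
        \<le> (\<Sum>\<beta><Bn. of_bool (\<exists>j\<in>{\<beta>*L'..<\<beta>*L'+L'}. A j) :: real)"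
   and "(\<Sum>\<beta><Bn. of_bool (\<exists>j\<in>{\<beta>*L'..<\<beta>*L'+L'}. A j) * of_bool (\<exists>j\<in>{\<beta>*L'..<\<beta>*L'+L'}. B j))
        \<le> (\<Sum>\<beta><Bn. of_bool (\<exists>j\<in>{\<beta>*L'..<\<beta>*L'+L'}. B j) :: real)"
    by (intro sum_mono; simp)+
  thus ?thesis using sum_blocks_le_card[OF assms, of A] sum_blocks_le_card[OF assms, of B] by linarith
qed

lemma prod_lessThan_pair_remove:
  fixes f :: "nat \<Rightarrow> 'a::comm_monoid_mult"
  assumes "a < M" and "J \<subseteq> {..<M} - {a}" and "b \<in> J"
    and "\<And>m. m < M \<Longrightarrow> m \<notin> insert a J \<Longrightarrow> f m = 1"
  shows "(\<Prod>m<M. f m) = f a * (f b * (\<Prod>m\<in>J-{b}. f m))"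
proof -
  have fJ: "finite J" using assms(2) finite_subset by blast
  have "(\<Prod>m<M. f m) = (\<Prod>m\<in>insert a J. f m)"
    using assms by (intro prod.mono_neutral_right) auto
  also have "\<dots> = f a * (\<Prod>m\<in>J. f m)" using fJ assms(2) by (subst prod.insert) auto
  also have "(\<Prod>m\<in>J. f m) = f b * (\<Prod>m\<in>J-{b}. f m)" using fJ assms(3) by (rule prod.remove)
  finally show ?thesis .
qed

text \<open>The product of \<open>pair_event \<dots> m (C m) (Y m)\<close> over all messages \<open>m\<close> indicates that the
  codewords of \<open>a\<close> and \<open>b\<close> lie in \<open>S\<close> and both clouds contain \<open>y\<close> within the block \<open>B\<close>, while no
  other message of \<open>J\<close> has its codeword in \<open>S\<close> and \<open>y\<close> in its cloud.\<close>

definition pair_event ::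
    "nat \<Rightarrow> nat set \<Rightarrow> 'x list set \<Rightarrow> 'y list \<Rightarrow> nat \<Rightarrow> nat \<Rightarrow> nat set \<Rightarrow> nat \<Rightarrow> 'x list \<Rightarrow> (nat \<Rightarrow> 'y list) \<Rightarrow> real" where
  "pair_event L J S y a b B m =
    (if m = a \<or> m = b then (\<lambda>x c. of_bool (x \<in> S \<and> (\<exists>j\<in>B. c j = y)))
     else if m \<in> J then (\<lambda>x c. 1 - of_bool (x \<in> S \<and> (\<exists>j<L. c j = y))) else (\<lambda>_ _. 1))"

lemma sum_pair_events_le_min:
  assumes "a < M" and J: "J \<subseteq> {..<M} - {a}" and "Bn * L' \<le> L"
  shows "(\<Sum>b\<in>J. \<Sum>\<beta><Bn. \<Prod>m<M. pair_event L J S y a b {\<beta>*L'..<\<beta>*L'+L'} m (C m) (Y m))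
         \<le> min (real (cloud_count L Y a y)) (\<Sum>m\<in>{..<M}-{a}. real (cloud_count L Y m y))"
proof -
  define cnt where "cnt m = cloud_count L Y m y" for m
  define H where "H m \<beta> = (of_bool (\<exists>j\<in>{\<beta>*L'..<\<beta>*L'+L'}. Y m j = y) :: real)" for m \<beta>
  define g where "g b = (\<Prod>m\<in>J-{b}. 1 - of_bool (C m \<in> S \<and> 0 < cnt m) :: real)" for b
  have fJ: "finite J" using J finite_subset by blast
  have g_nonneg: "0 \<le> g b" for b unfolding g_def by (intro prod_nonneg) auto
  have "(\<Prod>m<M. pair_event L J S y a b {\<beta>*L'..<\<beta>*L'+L'} m (C m) (Y m))
      = of_bool (C a \<in> S) * (of_bool (C b \<in> S) * g b) * (H a \<beta> * H b \<beta>)" if "b \<in> J" for b \<beta>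
  proof -
    have "a \<noteq> b" "a \<notin> J - {b}" using J that by auto
    moreover have "(\<Prod>m\<in>J-{b}. pair_event L J S y a b {\<beta>*L'..<\<beta>*L'+L'} m (C m) (Y m)) = g b"
      unfolding g_def cnt_def using J
      by (intro prod.cong refl) (auto simp: pair_event_def cloud_count_pos_iff)
    ultimately show ?thesis
      using that assms(1,2) by (subst prod_lessThan_pair_remove[of a M J b])
        (auto simp: pair_event_def H_def of_bool_conj)
  qed
  hence "(\<Sum>b\<in>J. \<Sum>\<beta><Bn. \<Prod>m<M. pair_event L J S y a b {\<beta>*L'..<\<beta>*L'+L'} m (C m) (Y m))
      = (\<Sum>b\<in>J. of_bool (C a \<in> S) * (of_bool (C b \<in> S) * g b) * (\<Sum>\<beta><Bn. H a \<beta> * H b \<beta>))"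
    by (simp add: sum_distrib_left)
  also have "\<dots> \<le> (\<Sum>b\<in>J. 1 * (of_bool (C b \<in> S) * g b) * min (real (cnt a)) (real (cnt b)))"
    unfolding H_def cnt_def cloud_count_def using g_nonneg
    by (intro sum_mono mult_mono sum_blocks_both_le_min assms(3)) auto
  also have "\<dots> \<le> min (real (cnt a)) (\<Sum>m\<in>J. real (cnt m))"
    using sum_unique_hit_le_min[OF fJ, of "real (cnt a)" "\<lambda>m. C m \<in> S" cnt] unfolding g_def
    by (simp add: mult_ac)
  also have "\<dots> \<le> min (real (cnt a)) (\<Sum>m\<in>{..<M}-{a}. real (cnt m))"
    using J by (intro min.mono order.refl sum_mono2) auto
  finally show ?thesis unfolding cnt_def .
qed

lemma sum_pair_events_le_ml_error:
  fixes Ys :: "'y::finite list set"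
  assumes "1 \<le> M" and "Ys \<subseteq> seqs n" and J: "\<And>a. a < M \<Longrightarrow> J a \<subseteq> {..<M} - {a}"
    and "Bn * L' \<le> L" and "\<forall>m<M. \<forall>j<L. Y m j \<in> seqs n"
  shows "(\<Sum>a<M. \<Sum>y\<in>Ys. \<Sum>b\<in>J a. \<Sum>\<beta><Bn. \<Prod>m<M. pair_event L (J a) (S y) y a b {\<beta>*L'..<\<beta>*L'+L'} m (C m) (Y m))
         \<le> 2 * (\<Sum>m<M. \<Sum>j<L. ml_error M L Y m j)"
proof -
  have "(\<Sum>a<M. \<Sum>y\<in>Ys. \<Sum>b\<in>J a. \<Sum>\<beta><Bn. \<Prod>m<M. pair_event L (J a) (S y) y a b {\<beta>*L'..<\<beta>*L'+L'} m (C m) (Y m))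
      \<le> (\<Sum>a<M. \<Sum>y\<in>Ys. min (real (cloud_count L Y a y)) (\<Sum>m\<in>{..<M}-{a}. real (cloud_count L Y m y)))"
    using J assms(4) by (intro sum_mono sum_pair_events_le_min) auto
  also have "\<dots> \<le> (\<Sum>a<M. \<Sum>y\<in>seqs n. min (real (cloud_count L Y a y)) (\<Sum>m\<in>{..<M}-{a}. real (cloud_count L Y m y)))"
    using assms(2) by (intro sum_mono sum_mono2) (auto intro: sum_nonneg)
  also have "\<dots> \<le> 2 * (\<Sum>m<M. \<Sum>j<L. ml_error M L Y m j)"
    using sum_ml_error_ge[OF assms(1) finite_seqs assms(5)] by simp
  finally show ?thesis .
qed

section \<open>Expected number of colliding pairs\<close>

context code_ensemble
begin

lemma ensemble_expect_pair_event:
  fixes \<pi> \<omega> :: real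
  assumes "a < M" and J: "J \<subseteq> {..<M} - {a}" "card J = N" and "b \<in> J"
    and B: "B \<subseteq> {..<L}" "card B = L'"
    and "S \<subseteq> seqs n" "card S = \<kappa>" and "y \<in> seqs n"
    and "\<forall>x\<in>S. seq_prob P x = \<pi> \<and> chan_prob W x y = \<omega>"
  shows "ensemble_expect n M L (\<lambda>C Y. \<Prod>m<M. pair_event L J S y a b B m (C m) (Y m))
      = (\<kappa> * \<pi> * (1 - (1 - \<omega>) ^ L'))\<^sup>2 * (1 - \<kappa> * \<pi> * (1 - (1 - \<omega>) ^ L)) ^ (N - 1)"
proof -
  note hits = msg_expect_hits[OF assms(7,9) _ assms(10), unfolded assms(8)]
  have "a \<noteq> b" using J assms(4) by auto
  hence ends: "msg_expect n L (pair_event L J S y a b B m) = \<kappa> * \<pi> * (1 - (1 - \<omega>) ^ L')"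
    if "m = a \<or> m = b" for m
    using that hits[OF B(1)] unfolding pair_event_def B(2) by auto
  have mid: "msg_expect n L (pair_event L J S y a b B m) = 1 - \<kappa> * \<pi> * (1 - (1 - \<omega>) ^ L)"
    if "m \<in> J - {b}" for m
    using that J hits[of "{..<L}"] by (auto simp: pair_event_def msg_expect_one_minus lessThan_def)
  have "ensemble_expect n M L (\<lambda>C Y. \<Prod>m<M. pair_event L J S y a b B m (C m) (Y m))
      = (\<Prod>m<M. msg_expect n L (pair_event L J S y a b B m))"
    by (rule ensemble_expect_prod)
  also have "\<dots> = msg_expect n L (pair_event L J S y a b B a) *
      (msg_expect n L (pair_event L J S y a b B b) * (\<Prod>m\<in>J-{b}. msg_expect n L (pair_event L J S y a b B m)))"
    using assms(1,2,4) by (rule prod_lessThan_pair_remove) (use assms(4) in \<open>auto simp: pair_event_def msg_expect_one\<close>)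
  also have "(\<Prod>m\<in>J-{b}. msg_expect n L (pair_event L J S y a b B m))
      = (1 - \<kappa> * \<pi> * (1 - (1 - \<omega>) ^ L)) ^ (N - 1)"
    using assms(4) J finite_subset[OF J(1)] by (simp add: mid card_Diff_singleton)
  finally show ?thesis by (simp add: ends power2_eq_square)
qed

lemma ensemble_expect_sum_pair_events:
  fixes Ys :: "'y list set" and S :: "'y list \<Rightarrow> 'x list set" and \<pi> \<omega> :: real
  assumes J: "\<And>a. a < M \<Longrightarrow> J a \<subseteq> {..<M} - {a} \<and> card (J a) = N"
    and Ys: "Ys \<subseteq> seqs n"
    and S: "\<And>y. y \<in> Ys \<Longrightarrow> S y \<subseteq> seqs n \<and> card (S y) = \<kappa> \<and> (\<forall>x\<in>S y. seq_prob P x = \<pi> \<and> chan_prob W x y = \<omega>)"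
    and blocks: "Bn * L' \<le> L"
  shows "ensemble_expect n M L
           (\<lambda>C Y. \<Sum>a<M. \<Sum>y\<in>Ys. \<Sum>b\<in>J a. \<Sum>\<beta><Bn. \<Prod>m<M. pair_event L (J a) (S y) y a b {\<beta>*L'..<\<beta>*L'+L'} m (C m) (Y m))
       = M * (card Ys * (N * (Bn * ((\<kappa> * \<pi> * (1 - (1 - \<omega>) ^ L'))\<^sup>2 * (1 - \<kappa> * \<pi> * (1 - (1 - \<omega>) ^ L)) ^ (N - 1)))))"
proof -
  have each: "ensemble_expect n M L (\<lambda>C Y. \<Prod>m<M. pair_event L (J a) (S y) y a b {\<beta>*L'..<\<beta>*L'+L'} m (C m) (Y m))
      = (\<kappa> * \<pi> * (1 - (1 - \<omega>) ^ L'))\<^sup>2 * (1 - \<kappa> * \<pi> * (1 - (1 - \<omega>) ^ L)) ^ (N - 1)"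
    if "a < M" "y \<in> Ys" "b \<in> J a" "\<beta> < Bn" for a y b \<beta>
  proof -
    have "Suc \<beta> * L' \<le> L" using that(4) blocks by (meson Suc_leI le_trans mult_le_mono1)
    hence "{\<beta>*L'..<\<beta>*L'+L'} \<subseteq> {..<L}" by auto
    thus ?thesis using J[OF that(1)] S[OF that(2)] that Ys by (intro ensemble_expect_pair_event) auto
  qed
  have "finite Ys" "a < M \<Longrightarrow> finite (J a)" for a
    using finite_subset[OF Ys] J by (auto intro: finite_subset[of _ "{..<M}"])
  thus ?thesis using J by (simp add: ensemble_expect_sum each)
qed

lemma avg_error_ge_pair_bound:
  fixes Ys :: "'y list set" and S :: "'y list \<Rightarrow> 'x list set" and \<pi> \<omega> :: real
  assumes M: "exp_size n R = M" "2 \<le> M" and L: "exp_size n K = L" "1 \<le> L"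
    and Ys: "Ys \<subseteq> seqs n"
    and S: "\<And>y. y \<in> Ys \<Longrightarrow> S y \<subseteq> seqs n \<and> card (S y) = \<kappa> \<and> (\<forall>x\<in>S y. seq_prob P x = \<pi> \<and> chan_prob W x y = \<omega>)"
    and N: "1 \<le> N" "N \<le> M - 1" and blocks: "Bn * L' \<le> L"
  shows "real (card Ys) * real N * real Bn * (\<kappa> * \<pi> * (1 - (1 - \<omega>) ^ L'))\<^sup>2 * (1 - \<kappa> * \<pi> * (1 - (1 - \<omega>) ^ L)) ^ (N - 1) / (2 * real L)
         \<le> avg_error P W R K n"
proof -
  obtain J where J: "\<And>a. a < M \<Longrightarrow> J a \<subseteq> {..<M} - {a} \<and> card (J a) = N"
  proof -
    have "\<exists>T. T \<subseteq> {..<M} - {a} \<and> card T = N" if "a < M" for a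
      using obtain_subset_with_card_n[of N "{..<M} - {a}"] N that by auto
    thus ?thesis using that by metis
  qed
  define G where "G C Y = (\<Sum>a<M. \<Sum>y\<in>Ys. \<Sum>b\<in>J a. \<Sum>\<beta><Bn.
      \<Prod>m<M. pair_event L (J a) (S y) y a b {\<beta>*L'..<\<beta>*L'+L'} m (C m) (Y m))" for C Y
  have "G C Y / (2 * M * L) \<le> (1 / real M) * (\<Sum>m<M. (1 / real L) * (\<Sum>j<L. ml_error M L Y m j))"
    if "Y \<in> PiE {..<M} (\<lambda>_. PiE {..<L} (\<lambda>_. seqs n))" for C Y
  proof -
    have "\<forall>m<M. \<forall>j<L. Y m j \<in> seqs n" using that by (auto simp del: mem_seqs_iff)
    hence "G C Y \<le> 2 * (\<Sum>m<M. \<Sum>j<L. ml_error M L Y m j)"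
      unfolding G_def using M(2) Ys J blocks by (intro sum_pair_events_le_ml_error) auto
    thus ?thesis using M L by (simp add: field_simps sum_distrib_left)
  qed
  hence "ensemble_expect n M L (\<lambda>C Y. G C Y / (2 * M * L)) \<le> avg_error P W R K n"
    unfolding avg_error_eq_ensemble_expect M L by (rule ensemble_expect_mono)
  hence "ensemble_expect n M L G / (2 * M * L) \<le> avg_error P W R K n"
    using ensemble_expect_scale[of n M L "1 / (2 * M * L)" G] by simp
  moreover have "ensemble_expect n M L G
      = M * (card Ys * (N * (Bn * ((\<kappa> * \<pi> * (1 - (1 - \<omega>) ^ L'))\<^sup>2 * (1 - \<kappa> * \<pi> * (1 - (1 - \<omega>) ^ L)) ^ (N - 1)))))"
    unfolding G_def using J Ys S blocks by (rule ensemble_expect_sum_pair_events)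
  ultimately show ?thesis using M by (simp add: field_simps)
qed

end

section \<open>Choosing the number of competitors and the blocks\<close>

lemma nat_floor_bounds:
  assumes "0 \<le> x"
  shows "x - 1 < real (nat \<lfloor>x\<rfloor>)" and "real (nat \<lfloor>x\<rfloor>) \<le> x"
  using assms by linarith+

lemma nat_floor_ge_half:
  assumes "1 \<le> x"
  shows "x / 2 \<le> real (nat \<lfloor>x\<rfloor>)" and "1 \<le> nat \<lfloor>x\<rfloor>"
proof -
  have "x - 1 < of_int \<lfloor>x\<rfloor>" "1 \<le> \<lfloor>x\<rfloor>" using assms by linarith+
  thus "x / 2 \<le> real (nat \<lfloor>x\<rfloor>)" "1 \<le> nat \<lfloor>x\<rfloor>" using assms by linarith+
qed

lemma one_minus_pow_le_exp:
  assumes "0 \<le> w" and "w \<le> 1"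
  shows "(1 - w) ^ m \<le> exp (- (w * real m))"
proof -
  have "(1 - w) ^ m \<le> exp (- w) ^ m"
    using assms exp_ge_add_one_self[of "- w"] by (intro power_mono) auto
  thus ?thesis by (simp add: exp_of_nat_mult[symmetric] mult.commute)
qed

lemma one_minus_pow_ge_half_min:
  assumes "0 \<le> w" and "w \<le> 1"
  shows "min (real L * w) 1 / 2 \<le> 1 - (1 - w) ^ L"
proof -
  define l where "l = real L * w"
  have l0: "0 \<le> l" using assms unfolding l_def by simp
  have pow: "(1 - w) ^ L \<le> exp (- l)"
    using one_minus_pow_le_exp[OF assms, of L] unfolding l_def by (simp add: mult.commute)
  show ?thesis
  proof (cases "l \<le> 1")
    case True
    have "exp (- l) \<le> 1 / (1 + l)"
      using exp_ge_add_one_self[of l] l0 by (simp add: exp_minus field_simps)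
    also have "\<dots> \<le> 1 - l / 2"
    proof -
      have "1 \<le> (1 - l / 2) * (1 + l)" using mult_left_le[OF True l0] by (simp add: algebra_simps)
      thus ?thesis using l0 by (simp add: divide_le_eq)
    qed
    finally show ?thesis using pow True unfolding l_def by simp
  next
    case False
    have "exp (- l) \<le> exp (- 1)" using False by simp
    also have "exp (- 1) \<le> (1 / 2 :: real)"
      using exp_ge_add_one_self[of 1] by (simp add: exp_minus field_simps)
    finally show ?thesis using pow False unfolding l_def by simp
  qed
qed

text \<open>The maximum of \<open>N \<mapsto> N s (1 - s q)\<^bsup>N-1\<^esup>\<close> over \<open>1 \<le> N \<le> M - 1\<close> is, up to a constant,
  attained near \<open>N = min (M - 1) (1 / (2 s q))\<close>.\<close>

lemma exists_competitor_count:
  fixes s q :: real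
  assumes s: "0 < s" "s \<le> 1" and q: "0 < q" "q \<le> 1" and M: "2 \<le> M"
  shows "\<exists>N. 1 \<le> N \<and> N \<le> M - 1 \<and> min (real (M - 1) * s) (1 / q) / 8 \<le> real N * s * (1 - s * q) ^ (N - 1)"
proof -
  define z where "z = s * q"
  have z: "0 < z" "z \<le> 1" unfolding z_def using s q by (auto intro: mult_le_one)
  show ?thesis
  proof (cases "z > 1/2")
    case True
    hence "1 / q < 2 * s" using q unfolding z_def by (simp add: field_simps)
    moreover have "min (real (M - 1) * s) (1 / q) \<le> 1 / q" by simp
    ultimately have "min (real (M - 1) * s) (1 / q) / 8 \<le> s" using s by (simp add: field_simps)
    thus ?thesis using M by (intro exI[of _ 1]) auto
  next
    case False
    define t where "t = min (real (M - 1)) (1 / (2 * z))"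
    have t1: "1 \<le> t" unfolding t_def using M z False by (auto simp: field_simps)
    define N where "N = nat \<lfloor>t\<rfloor>"
    have N: "t / 2 \<le> real N" "1 \<le> N" "real N \<le> t" unfolding N_def using nat_floor_ge_half[OF t1] nat_floor_bounds[of t] t1 by auto
    have NM: "N \<le> M - 1" using N(3) unfolding t_def by linarith
    have "real N \<le> 1 / (2 * z)" using N(3) unfolding t_def by simp
    hence "real N * z \<le> 1/2" using z by (simp add: field_simps)
    hence "1/2 \<le> 1 - real (N - 1) * z" using z N(2) by (simp add: of_nat_diff algebra_simps)
    also have "\<dots> \<le> (1 - z) ^ (N - 1)" using Bernoulli_inequality[of "- z" "N - 1"] z by simp
    finally have pow: "1/2 \<le> (1 - z) ^ (N - 1)" .
    have "min (real (M - 1) * s) (1 / q) / 8 \<le> t * s / 4"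
      using s q z unfolding t_def z_def by (auto simp: min_def field_simps)
    also have "\<dots> \<le> real N * s * (1 - z) ^ (N - 1)"
      using mult_mono[OF mult_right_mono[OF N(1), of s] pow] s by (simp add: field_simps)
    finally show ?thesis using N(2) NM unfolding z_def by blast
  qed
qed

text \<open>One block of length \<open>L\<close> if \<open>L w \<le> 1\<close>, otherwise \<open>L div L'\<close> blocks of length \<open>L' \<approx> 1 / w\<close>.\<close>

lemma exists_block_partition:
  fixes w :: real
  assumes w: "0 < w" "w \<le> 1"
  shows "\<exists>Bn L'. Bn * L' \<le> L \<and> (1 - (1 - w) ^ L) * (real L * w) / 18 \<le> real Bn * (1 - (1 - w) ^ L')\<^sup>2"
proof (cases "real L * w \<le> 1")
  case True
  have q: "real L * w / 2 \<le> 1 - (1 - w) ^ L"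
    using one_minus_pow_ge_half_min[of w L] w True by simp
  have "0 \<le> 1 - (1 - w) ^ L" using w by (simp add: power_le_one)
  hence "(1 - (1 - w) ^ L) * (real L * w) / 18 \<le> (1 - (1 - w) ^ L) * (real L * w / 2)"
    using w by (simp add: mult_left_mono)
  also have "\<dots> \<le> (1 - (1 - w) ^ L) * (1 - (1 - w) ^ L)"
    using q \<open>0 \<le> 1 - (1 - w) ^ L\<close> by (rule mult_left_mono)
  finally show ?thesis by (intro exI[of _ 1] exI[of _ L]) (simp add: power2_eq_square)
next
  case False
  define L' where "L' = nat \<lfloor>1 / w\<rfloor>"
  have one: "1 \<le> 1 / w" using w by simp
  have L': "1 / w / 2 \<le> real L'" "1 \<le> L'" "real L' \<le> 1 / w"
    unfolding L'_def using nat_floor_ge_half[OF one] nat_floor_bounds[of "1 / w"] w by auto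
  have "(1 - w) ^ L' \<le> exp (- (w * real L'))" using one_minus_pow_le_exp w by auto
  also have "\<dots> \<le> exp (- (1/2))" using L'(1) w by (simp add: field_simps)
  also have "\<dots> \<le> 2/3" using exp_ge_add_one_self[of "1/2"] by (simp add: exp_minus field_simps)
  finally have q': "1/3 \<le> 1 - (1 - w) ^ L'" by simp
  define Bn where "Bn = L div L'"
  have "real L * w \<le> real L / real L'"
    using L'(2,3) w mult_left_mono[OF L'(3), of "real L * w"] by (simp add: field_simps)
  moreover have "real L / real L' / 2 \<le> real Bn"
    using nat_floor_ge_half(1)[of "real L / real L'"] False calculation
    unfolding Bn_def by (simp add: floor_divide_of_nat_eq)
  ultimately have Bn: "real L * w / 2 \<le> real Bn" by simp
  have "(1 - (1 - w) ^ L) * (real L * w) / 18 \<le> real L * w / 18"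
    using False w by (intro divide_right_mono mult_left_le_one_le) (auto simp: power_le_one)
  also have "\<dots> \<le> real Bn * (1/3)\<^sup>2" using Bn by (simp add: power2_eq_square mult.commute)
  also have "\<dots> \<le> real Bn * (1 - (1 - w) ^ L')\<^sup>2" using q' by (intro mult_left_mono power_mono) auto
  finally show ?thesis by (intro exI[of _ Bn] exI[of _ L']) (simp add: Bn_def)
qed

lemma min_inverse_mult:
  fixes a q :: real
  assumes "0 < q"
  shows "min a (1 / q) * q = min (a * q) 1"
  using assms by (cases "a \<le> 1 / q") (auto simp: min_def field_simps)

lemma (in code_ensemble) avg_error_ge_type_bound:
  fixes Ys :: "'y list set" and S :: "'y list \<Rightarrow> 'x list set" and \<pi> \<omega> :: real
  assumes M: "exp_size n R = M" "2 \<le> M" and L: "exp_size n K = L" "1 \<le> L"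
    and Ys: "Ys \<subseteq> seqs n"
    and S: "\<And>y. y \<in> Ys \<Longrightarrow> S y \<subseteq> seqs n \<and> card (S y) = \<kappa> \<and> (\<forall>x\<in>S y. seq_prob P x = \<pi> \<and> chan_prob W x y = \<omega>)"
    and s: "0 < \<kappa> * \<pi>" "\<kappa> * \<pi> \<le> 1" and w: "0 < \<omega>" "\<omega> \<le> 1"
  shows "real (card Ys) * (\<kappa> * \<pi>) * \<omega> * min (real (M - 1) * (\<kappa> * \<pi>) * min (real L * \<omega>) 1 / 2) 1 / 288
         \<le> avg_error P W R K n"
proof -
  define s where "s = \<kappa> * \<pi>"
  define q where "q = 1 - (1 - \<omega>) ^ L"
  define T where "T = real (card Ys)"
  have s': "0 < s" "s \<le> 1" using s unfolding s_def by auto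
  have T: "0 \<le> T" unfolding T_def by simp
  have q_ge: "min (real L * \<omega>) 1 / 2 \<le> q"
    unfolding q_def using one_minus_pow_ge_half_min w by simp
  have "0 < min (real L * \<omega>) 1" using w L(2) by simp
  hence q: "0 < q" "q \<le> 1"
    using q_ge w unfolding q_def by auto
  obtain N where N: "1 \<le> N" "N \<le> M - 1"
    and N_bound: "min (real (M - 1) * s) (1 / q) / 8 \<le> real N * s * (1 - s * q) ^ (N - 1)"
    using exists_competitor_count[OF s' q M(2)] by blast
  obtain Bn L' where blocks: "Bn * L' \<le> L"
    and B_bound: "q * (real L * \<omega>) / 18 \<le> real Bn * (1 - (1 - \<omega>) ^ L')\<^sup>2"
    using exists_block_partition[OF w, of L] unfolding q_def by blast
  have "real (M - 1) * s * (min (real L * \<omega>) 1 / 2) \<le> real (M - 1) * s * q"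
    using s' q_ge by (intro mult_left_mono) auto
  hence "T * s * \<omega> * min (real (M - 1) * s * min (real L * \<omega>) 1 / 2) 1 / 288 \<le> T * s * \<omega> * min (real (M - 1) * s * q) 1 / 288"
    using T s' w by (intro divide_right_mono mult_left_mono min.mono) auto
  also have "\<dots> = T * s * (min (real (M - 1) * s) (1 / q) / 8) * (q * (real L * \<omega>) / 18) / (2 * real L)"
    using L(2) min_inverse_mult[OF q(1), of "real (M - 1) * s"] by (simp add: field_simps)
  also have "\<dots> \<le> T * s * (real N * s * (1 - s * q) ^ (N - 1)) * (real Bn * (1 - (1 - \<omega>) ^ L')\<^sup>2) / (2 * real L)"
    using T s' q w N_bound B_bound mult_le_one[of s q]
    by (intro divide_right_mono mult_mono mult_left_mono) (auto intro!: mult_nonneg_nonneg)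
  also have "\<dots> = T * N * Bn * (s * (1 - (1 - \<omega>) ^ L'))\<^sup>2 * (1 - s * q) ^ (N - 1) / (2 * real L)"
    by (simp add: power2_eq_square mult_ac)
  also have "\<dots> \<le> avg_error P W R K n"
    unfolding T_def s_def q_def by (rule avg_error_ge_pair_bound[OF M L Ys S N blocks])
  finally show ?thesis unfolding T_def s_def .
qed

section \<open>Joint types\<close>

lemma prod_nth_eq_prod_mset: "(\<Prod>i<length xs. f (xs ! i)) = prod_mset (image_mset f (mset xs))"
proof (induction xs)
  case (Cons a xs)
  show ?case by (simp only: length_Cons prod.lessThan_Suc_shift) (simp add: Cons)
qed simp

lemma card_permutations_of_multiset_pos: "0 < card (permutations_of_multiset A)"
  by (simp add: card_gt_0_iff)

lemma permutations_of_multiset_subset_seqs: "permutations_of_multiset A \<subseteq> seqs (size A)"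
  by (auto simp: permutations_of_multiset_def)

definition cond_type_class :: "('y \<times> 'x) multiset \<Rightarrow> 'y list \<Rightarrow> 'x list set" where
  "cond_type_class k y = {x. length x = size k \<and> mset (zip y x) = k}"

lemma cond_type_class_subset_seqs: "cond_type_class k y \<subseteq> seqs (size k)"
  unfolding cond_type_class_def by auto

lemma finite_cond_type_class [simp]: "finite (cond_type_class (k :: ('y \<times> 'x::finite) multiset) y)"
  using finite_subset[OF cond_type_class_subset_seqs finite_seqs] .

lemma mset_map_snd_cond_type_class:
  assumes "y \<in> permutations_of_multiset (image_mset fst k)" and "x \<in> cond_type_class k y"
  shows "length y = size k" "mset x = image_mset snd k"
proof -
  show ly: "length y = size k"
    using assms(1) by (auto simp: permutations_of_multiset_def dest: arg_cong[of _ _ size])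
  have "length x = size k" "mset (zip y x) = k" using assms(2) unfolding cond_type_class_def by auto
  thus "mset x = image_mset snd k" using ly by (metis map_snd_zip mset_map)
qed

lemma seq_prob_cond_type_class:
  assumes "y \<in> permutations_of_multiset (image_mset fst k)" and "x \<in> cond_type_class k y"
  shows "seq_prob P x = prod_mset (image_mset (\<lambda>p. P (snd p)) k)"
  using mset_map_snd_cond_type_class[OF assms]
  unfolding seq_prob_def prod_nth_eq_prod_mset by (simp add: image_mset.compositionality o_def)

lemma chan_prob_cond_type_class:
  assumes "y \<in> permutations_of_multiset (image_mset fst k)" and "x \<in> cond_type_class k y"
  shows "chan_prob W x y = prod_mset (image_mset (\<lambda>p. W (snd p) (fst p)) k)"
proof -
  have "length x = size k" "mset (zip y x) = k" using assms(2) unfolding cond_type_class_def by auto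
  moreover have "length y = size k" using mset_map_snd_cond_type_class[OF assms] by simp
  ultimately show ?thesis
    unfolding chan_prob_def using prod_nth_eq_prod_mset[of "\<lambda>p. W (snd p) (fst p)" "zip y x"] by simp
qed

text \<open>Permuting \<open>y\<close> permutes its conditional type class.\<close>

lemma card_cond_type_class_le:
  fixes k :: "('y \<times> 'x::finite) multiset"
  assumes y: "y \<in> permutations_of_multiset (image_mset fst k)"
    and y': "y' \<in> permutations_of_multiset (image_mset fst k)"
  shows "card (cond_type_class k y') \<le> card (cond_type_class k y)"
proof -
  have "mset y = mset y'" using y y' by (simp add: permutations_of_multiset_def)
  then obtain \<sigma> where \<sigma>: "\<sigma> permutes {..<length y'}" "permute_list \<sigma> y' = y" by (rule mset_eq_permutation)
  have ly': "length y' = size k" using mset_map_snd_cond_type_class(1) y' by (auto simp: permutations_of_multiset_def dest: arg_cong[of _ _ size])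
  have maps: "permute_list \<sigma> x \<in> cond_type_class k y" if "x \<in> cond_type_class k y'" for x
  proof -
    have lx: "length x = size k" and z: "mset (zip y' x) = k" using that unfolding cond_type_class_def by auto
    have "zip y (permute_list \<sigma> x) = permute_list \<sigma> (zip y' x)"
      using \<sigma> lx ly' by (subst permute_list_zip) auto
    thus ?thesis using z \<sigma> lx ly' unfolding cond_type_class_def by (simp add: mset_permute_list)
  qed
  have "inj_on (permute_list \<sigma>) (cond_type_class k y')"
  proof (rule inj_onI)
    fix x1 x2 assume "x1 \<in> cond_type_class k y'" "x2 \<in> cond_type_class k y'"
      and eq: "permute_list \<sigma> x1 = permute_list \<sigma> x2"
    hence l: "length x1 = length y'" "length x2 = length y'" using ly' unfolding cond_type_class_def by auto
    show "x1 = x2"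
    proof (rule nth_equalityI)
      fix i assume "i < length x1"
      then obtain j where j: "j < length y'" "\<sigma> j = i"
        using permutes_image[OF \<sigma>(1)] l by (metis imageE lessThan_iff)
      have "permute_list \<sigma> x1 ! j = permute_list \<sigma> x2 ! j" using eq by simp
      thus "x1 ! i = x2 ! i" using j l \<sigma>(1) by (simp add: permute_list_nth)
    qed (use l in simp)
  qed
  thus ?thesis by (rule card_inj_on_le) (use maps in auto)
qed

lemma card_cond_type_class_eq:
  fixes k :: "('y \<times> 'x::finite) multiset"
  assumes "y \<in> permutations_of_multiset (image_mset fst k)" and "y' \<in> permutations_of_multiset (image_mset fst k)"
  shows "card (cond_type_class k y') = card (cond_type_class k y)"
  using card_cond_type_class_le[OF assms] card_cond_type_class_le[OF assms(2,1)] by simp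

lemma card_permutations_of_multiset_joint:
  fixes k :: "('y::finite \<times> 'x::finite) multiset"
  shows "card (permutations_of_multiset k)
       = (\<Sum>y\<in>permutations_of_multiset (image_mset fst k). card (cond_type_class k y))"
proof -
  have "bij_betw (\<lambda>zs. (map fst zs, map snd zs)) (permutations_of_multiset k)
      (SIGMA y:permutations_of_multiset (image_mset fst k). cond_type_class k y)"
  proof (rule bij_betwI[where g = "\<lambda>(y, x). zip y x"])
    show "(\<lambda>zs. (map fst zs, map snd zs)) \<in> permutations_of_multiset k \<rightarrow>
        (SIGMA y:permutations_of_multiset (image_mset fst k). cond_type_class k y)"
      unfolding permutations_of_multiset_def cond_type_class_def
      by (auto simp: zip_map_fst_snd dest: arg_cong[of _ _ size])
    show "(\<lambda>(y, x). zip y x) \<in> (SIGMA y:permutations_of_multiset (image_mset fst k). cond_type_class k y)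
        \<rightarrow> permutations_of_multiset k"
      unfolding permutations_of_multiset_def cond_type_class_def by auto
    show "(map fst (case yx of (y, x) \<Rightarrow> zip y x), map snd (case yx of (y, x) \<Rightarrow> zip y x)) = yx"
      if "yx \<in> (SIGMA y:permutations_of_multiset (image_mset fst k). cond_type_class k y)" for yx
      using that unfolding permutations_of_multiset_def cond_type_class_def
      by (auto dest: arg_cong[of _ _ size])
  qed (simp add: zip_map_fst_snd)
  hence "card (permutations_of_multiset k)
      = card (SIGMA y:permutations_of_multiset (image_mset fst k). cond_type_class k y)"
    by (rule bij_betw_same_card)
  also have "\<dots> = (\<Sum>y\<in>permutations_of_multiset (image_mset fst k). card (cond_type_class k y))"
    by (rule card_SigmaI) auto
  finally show ?thesis .
qed

lemma prod_mset_pos: "(\<And>p. p \<in># k \<Longrightarrow> 0 < f p) \<Longrightarrow> 0 < prod_mset (image_mset f k :: real multiset)"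
  by (induction k) auto

lemma (in code_ensemble) card_mult_seq_prob_le_1:
  assumes "S \<subseteq> seqs n" and "\<forall>x\<in>S. seq_prob P x = \<pi>"
  shows "real (card S) * \<pi> \<le> 1"
proof -
  have "real (card S) * \<pi> = (\<Sum>x\<in>S. seq_prob P x)" using assms(2) by simp
  also have "\<dots> \<le> (\<Sum>x\<in>seqs n. seq_prob P x)"
    using assms(1) by (intro sum_mono2) (auto simp: seq_prob_nonneg)
  finally show ?thesis by (simp add: sum_seq_prob)
qed

lemma (in code_ensemble) avg_error_ge_joint_type:
  fixes k :: "('y \<times> 'x) multiset"
  assumes M: "exp_size n R = M" "2 \<le> M" and L: "exp_size n K = L" "1 \<le> L"
    and n: "size k = n" and supp: "\<And>p. p \<in># k \<Longrightarrow> 0 < P (snd p) \<and> 0 < W (snd p) (fst p)"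
  defines "\<mu> \<equiv> real (card (permutations_of_multiset k))"
    and "\<tau> \<equiv> real (card (permutations_of_multiset (image_mset fst k)))"
    and "\<pi> \<equiv> prod_mset (image_mset (\<lambda>p. P (snd p)) k)"
    and "\<omega> \<equiv> prod_mset (image_mset (\<lambda>p. W (snd p) (fst p)) k)"
  shows "\<mu> * \<pi> * \<omega> * min (real (M - 1) * (\<mu> / \<tau> * \<pi>) * min (real L * \<omega>) 1 / 2) 1 / 288
         \<le> avg_error P W R K n"
proof -
  define Ys where "Ys = permutations_of_multiset (image_mset fst k)"
  obtain y0 where y0: "y0 \<in> Ys" unfolding Ys_def by (metis ex_in_conv permutations_of_multiset_not_empty)
  define \<kappa> where "\<kappa> = card (cond_type_class k y0)"
  have card_cond: "card (cond_type_class k y) = \<kappa>" if "y \<in> Ys" for y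
    unfolding \<kappa>_def using card_cond_type_class_eq y0 that unfolding Ys_def by blast
  have \<mu>: "\<mu> = \<tau> * \<kappa>"
    unfolding \<mu>_def \<tau>_def card_permutations_of_multiset_joint using card_cond by (simp add: Ys_def)
  have \<tau>: "0 < \<tau>" unfolding \<tau>_def using card_permutations_of_multiset_pos by simp
  have "0 < \<mu>" unfolding \<mu>_def using card_permutations_of_multiset_pos by simp
  hence \<kappa>: "0 < \<kappa>" using \<mu> \<tau> by (simp add: zero_less_mult_iff)
  have \<pi>: "0 < \<pi>" unfolding \<pi>_def using supp by (intro prod_mset_pos) auto
  have \<omega>: "0 < \<omega>" unfolding \<omega>_def using supp by (intro prod_mset_pos) auto
  have S: "cond_type_class k y \<subseteq> seqs n \<and> card (cond_type_class k y) = \<kappa> \<and>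
      (\<forall>x\<in>cond_type_class k y. seq_prob P x = \<pi> \<and> chan_prob W x y = \<omega>)" if "y \<in> Ys" for y
    using cond_type_class_subset_seqs[of k y] n card_cond[OF that]
      seq_prob_cond_type_class chan_prob_cond_type_class that
    unfolding \<pi>_def \<omega>_def Ys_def by auto
  have "\<kappa> * \<pi> \<le> 1" using S[OF y0] card_mult_seq_prob_le_1 by metis
  moreover have "\<omega> \<le> 1"
  proof -
    obtain x where "x \<in> cond_type_class k y0"
      using \<kappa> unfolding \<kappa>_def by (metis card.empty equals0I of_nat_0 less_irrefl)
    thus ?thesis using S[OF y0] chan_prob_le_1 by metis
  qed
  ultimately have "real (card Ys) * (\<kappa> * \<pi>) * \<omega> * min (real (M - 1) * (\<kappa> * \<pi>) * min (real L * \<omega>) 1 / 2) 1 / 288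
      \<le> avg_error P W R K n"
    using \<kappa> \<pi> \<omega> permutations_of_multiset_subset_seqs[of "image_mset fst k"] n
    by (intro avg_error_ge_type_bound[OF M L _ S]) (auto simp: Ys_def)
  thus ?thesis using \<mu> \<tau> unfolding \<tau>_def Ys_def by (simp add: mult_ac)
qed

section \<open>Counting type classes\<close>

lemma pow_div_fact_le_exp:
  fixes x :: real
  assumes "0 \<le> x"
  shows "x ^ n / fact n \<le> exp x"
proof -
  have "(\<Sum>i\<in>{n}. x ^ i /\<^sub>R fact i) \<le> (\<Sum>i. x ^ i /\<^sub>R fact i)"
    using assms by (intro sum_le_suminf summable_exp_generic) auto
  thus ?thesis by (simp add: exp_def divide_inverse mult.commute)
qed

lemma ln_fact_ge: "real m * ln (real m) - real m \<le> ln (fact m)"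
proof (cases "m = 0")
  case False
  have "real m ^ m \<le> exp (real m) * fact m"
    using pow_div_fact_le_exp[of "real m" m] by (simp add: divide_le_eq mult.commute)
  hence "ln (real m ^ m) \<le> ln (exp (real m) * fact m)"
    using False by (subst ln_le_cancel_iff) auto
  thus ?thesis using False by (simp add: ln_realpow ln_mult)
qed simp

lemma exp_mult_pow_le_Suc_pow:
  assumes "1 \<le> j"
  shows "exp 1 * real j ^ (j + 1) \<le> (real j + 1) ^ (j + 1)"
proof -
  have j: "1 \<le> real j" using assms by simp
  have "(1 - 1 / (real j + 1)) ^ (j + 1) \<le> exp (- (1 / (real j + 1) * real (j + 1)))"
    using j by (intro one_minus_pow_le_exp) auto
  hence "(real j / (real j + 1)) ^ (j + 1) \<le> exp (- 1)"
    using j by (simp add: field_simps)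
  hence "real j ^ (j + 1) \<le> exp (- 1) * (real j + 1) ^ (j + 1)"
    using j by (simp add: power_divide divide_le_eq)
  thus ?thesis by (simp add: exp_minus field_simps)
qed

lemma fact_le_Suc_pow_exp: "fact m \<le> (real m + 1) ^ (m + 1) * exp (- real m)"
proof (induction m)
  case (Suc m)
  have "fact (Suc m) = (real m + 1) * fact m" by simp
  also have "\<dots> \<le> (real m + 1) * ((real m + 1) ^ (m + 1) * exp (- real m))"
    using Suc by (intro mult_left_mono) auto
  also have "\<dots> = exp (- 1) * (exp 1 * real (m + 1) ^ (m + 1 + 1)) * exp (- real m)"
    by (simp add: exp_minus field_simps)
  also have "\<dots> \<le> exp (- 1) * (real (m + 1) + 1) ^ (m + 1 + 1) * exp (- real m)"
    by (intro mult_right_mono mult_left_mono exp_mult_pow_le_Suc_pow) auto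
  also have "\<dots> = (real (Suc m) + 1) ^ (Suc m + 1) * exp (- real (Suc m))"
  proof -
    have "exp (- real (Suc m)) = exp (- 1) * exp (- real m)" by (simp add: exp_add[symmetric] algebra_simps)
    thus ?thesis by (simp add: mult_ac add.commute)
  qed
  finally show ?case .
qed simp

lemma ln_fact_le: "ln (fact m) \<le> real m * ln (real m) - real m + 1 + ln (real m + 1)"
proof -
  have "ln (fact m) \<le> ln ((real m + 1) ^ (m + 1) * exp (- real m))"
    using fact_le_Suc_pow_exp[of m] by (subst ln_le_cancel_iff) auto
  also have "\<dots> = (real m + 1) * ln (real m + 1) - real m"
  proof -
    have "ln ((real m + 1) ^ (m + 1) * exp (- real m)) = ln ((real m + 1) ^ (m + 1)) + ln (exp (- real m))"
      by (subst ln_mult) auto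
    also have "ln ((real m + 1) ^ (m + 1)) = real (m + 1) * ln (real m + 1)" by (rule ln_realpow)
    finally show ?thesis by simp
  qed
  also have "real m * ln (real m + 1) \<le> real m * ln (real m) + 1"
  proof (cases "m = 0")
    case False
    hence m: "0 < real m" by simp
    have "ln ((real m + 1) / real m) \<le> (real m + 1) / real m - 1"
      using m by (intro ln_le_minus_one) auto
    hence "real m * (ln (real m + 1) - ln (real m)) \<le> real m * (1 / real m)"
      using m by (intro mult_left_mono) (auto simp: ln_div field_simps)
    thus ?thesis using m by (simp add: algebra_simps)
  qed simp
  hence "(real m + 1) * ln (real m + 1) - real m \<le> real m * ln (real m) - real m + 1 + ln (real m + 1)"
    by (simp add: algebra_simps)
  finally show ?thesis .
qed

definition neg_entropy :: "('p::finite \<Rightarrow> real) \<Rightarrow> real" where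
  "neg_entropy Q = (\<Sum>p\<in>UNIV. Q p * ln (Q p))"

lemma sum_xlnx_eq_neg_entropy:
  fixes c :: "'p::finite \<Rightarrow> nat"
  assumes "0 < n" and "(\<Sum>p\<in>UNIV. c p) = n"
  shows "(\<Sum>p\<in>UNIV. real (c p) * ln (real (c p)))
       = real n * ln (real n) + real n * neg_entropy (\<lambda>p. real (c p) / real n)"
proof -
  define h where "h p = real (c p) / real n * ln (real (c p) / real n)" for p
  have "real (c p) * ln (real (c p)) = real (c p) * ln (real n) + real n * h p" for p
    using assms(1) unfolding h_def by (cases "c p = 0") (simp_all add: ln_div algebra_simps)
  hence "(\<Sum>p\<in>UNIV. real (c p) * ln (real (c p)))
      = (\<Sum>p\<in>UNIV. real (c p)) * ln (real n) + real n * (\<Sum>p\<in>UNIV. h p)"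
    by (simp add: sum.distrib sum_distrib_left sum_distrib_right)
  moreover have "(\<Sum>p\<in>UNIV. real (c p)) = real n" using assms(2) by (metis of_nat_sum)
  ultimately show ?thesis unfolding neg_entropy_def h_def by simp
qed

lemma card_permutations_of_multiset_mult_prod_fact:
  fixes k :: "'p::finite multiset"
  shows "real (card (permutations_of_multiset k)) * (\<Prod>p\<in>UNIV. fact (count k p)) = fact (size k)"
proof -
  have "(\<Prod>p\<in>UNIV. fact (count k p) :: nat) = (\<Prod>p\<in>set_mset k. fact (count k p))"
    by (rule prod.mono_neutral_right) (auto simp: not_in_iff)
  hence "card (permutations_of_multiset k) * (\<Prod>p\<in>UNIV. fact (count k p) :: nat) = fact (size k)"
    using card_permutations_of_multiset_aux[of k] by simp
  hence "real (card (permutations_of_multiset k) * (\<Prod>p\<in>UNIV. fact (count k p) :: nat)) = real (fact (size k))"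
    by simp
  thus ?thesis by (simp add: of_nat_prod)
qed

lemma size_eq_sum_count: "size (k :: 'p::finite multiset) = (\<Sum>p\<in>UNIV. count k p)"
  by (subst size_multiset_overloaded_eq) (rule sum.mono_neutral_left, auto simp: not_in_iff)

lemma ln_card_permutations_of_multiset_bounds:
  fixes k :: "'p::finite multiset"
  assumes n: "0 < size k"
  defines "Q \<equiv> \<lambda>p. real (count k p) / real (size k)"
  shows "- real (size k) * neg_entropy Q - real CARD('p) * (1 + ln (real (size k) + 1))
           \<le> ln (real (card (permutations_of_multiset k)))"
    and "ln (real (card (permutations_of_multiset k))) \<le> - real (size k) * neg_entropy Q + 1 + ln (real (size k) + 1)"
proof -
  define n c where "n = size k" and "c = count k"
  have cs: "(\<Sum>p\<in>UNIV. c p) = n" unfolding n_def c_def by (rule size_eq_sum_count[symmetric])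
  have "0 < (\<Prod>p\<in>UNIV. fact (c p) :: real)" by (intro prod_pos) auto
  hence "real (card (permutations_of_multiset k)) = fact n / (\<Prod>p\<in>UNIV. fact (c p))"
    using card_permutations_of_multiset_mult_prod_fact[of k] unfolding n_def c_def by (simp add: field_simps)
  hence "ln (real (card (permutations_of_multiset k))) = ln (fact n) - (\<Sum>p\<in>UNIV. ln (fact (c p)))"
    by (simp add: ln_div ln_prod)
  moreover have "(\<Sum>p\<in>UNIV. real (c p)) = real n" using cs by (metis of_nat_sum)
  moreover have "ln (real (c p) + 1) \<le> ln (real n + 1)" for p
    using member_le_sum[of p UNIV c] cs by simp
  hence "(\<Sum>p\<in>UNIV. ln (fact (c p))) \<le> (\<Sum>p\<in>UNIV. real (c p) * ln (real (c p)) - real (c p) + (1 + ln (real n + 1)))"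
    by (intro sum_mono order.trans[OF ln_fact_le]) (simp add: add.assoc)
  moreover have "(\<Sum>p\<in>UNIV. real (c p) * ln (real (c p)) - real (c p)) \<le> (\<Sum>p\<in>UNIV. ln (fact (c p)))"
    by (intro sum_mono ln_fact_ge)
  ultimately show "- real (size k) * neg_entropy Q - real CARD('p) * (1 + ln (real (size k) + 1))
           \<le> ln (real (card (permutations_of_multiset k)))"
    and "ln (real (card (permutations_of_multiset k))) \<le> - real (size k) * neg_entropy Q + 1 + ln (real (size k) + 1)"
    using ln_fact_ge[of n] ln_fact_le[of n] sum_xlnx_eq_neg_entropy[OF _ cs] n
    unfolding Q_def n_def[symmetric] c_def[symmetric] by (simp_all add: sum.distrib sum_subtractf)
qed

lemma count_image_fst: "count (image_mset fst k) b = (\<Sum>a\<in>UNIV. count k (b, a :: 'x::finite))"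
proof (induction k)
  case (add p k)
  obtain b' a' where p: "p = (b', a')" by (cases p)
  have "count (add_mset p k) (b, a) = count k (b, a) + (if b' = b \<and> a = a' then 1 else 0)" for a
    by (auto simp: p)
  hence "(\<Sum>a\<in>UNIV. count (add_mset p k) (b, a))
      = (\<Sum>a\<in>UNIV. count k (b, a)) + (\<Sum>a\<in>UNIV. if b' = b \<and> a = a' then 1 else 0)"
    by (simp add: sum.distrib)
  also have "(\<Sum>a\<in>UNIV. if b' = b \<and> a = a' then 1 else 0) = (if b' = b then 1 else 0)"
    by (cases "b' = b") auto
  finally show ?case using add by (auto simp: p)
qed simp

lemma prod_mset_image_eq_prod_power:
  fixes k :: "'p::finite multiset"
  shows "prod_mset (image_mset f k) = (\<Prod>p\<in>UNIV. (f p :: real) ^ count k p)"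
proof (induction k)
  case (add a k)
  have "(\<Prod>p\<in>UNIV. f p ^ count (add_mset a k) p) = (\<Prod>p\<in>UNIV. f p ^ count k p * (if p = a then f p else 1))"
    by (intro prod.cong) auto
  also have "\<dots> = (\<Prod>p\<in>UNIV. f p ^ count k p) * f a" by (simp add: prod.distrib)
  finally show ?case using add by (simp add: mult.commute)
qed simp

lemma ln_prod_mset_image:
  fixes k :: "'p::finite multiset" and f :: "'p \<Rightarrow> real"
  assumes "\<And>p. p \<in># k \<Longrightarrow> 0 < f p"
  shows "ln (prod_mset (image_mset f k)) = (\<Sum>p\<in>UNIV. real (count k p) * ln (f p))"
proof -
  have "f p ^ count k p \<noteq> 0" for p
  proof (cases "p \<in># k")
    case True thus ?thesis using assms[OF True] by simp
  qed (simp add: not_in_iff)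
  thus ?thesis unfolding prod_mset_image_eq_prod_power by (simp add: ln_prod ln_realpow)
qed

section \<open>The error exponent of a joint type\<close>

lemma pos_part_mono: "x \<le> y \<Longrightarrow> pos_part x \<le> pos_part y"
  by (simp add: pos_part_def)

lemma mult_pos_part: "0 \<le> a \<Longrightarrow> a * pos_part x = pos_part (a * x)"
  by (simp add: pos_part_def max_mult_distrib_left)

lemma mult_nested_pos_part:
  "0 \<le> a \<Longrightarrow> a * (x + pos_part (y + pos_part z)) = a * x + pos_part (a * y + pos_part (a * z))"
  by (simp add: mult_pos_part distrib_left)

lemma neg_ln_min_one: "0 < x \<Longrightarrow> - ln (min x 1) = pos_part (- ln x)"
  by (cases "x \<le> 1") (auto simp: pos_part_def min_def max_def)

lemma neg_ln_type_bound:
  fixes \<mu> \<tau> \<pi> \<omega> M L :: real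
  assumes "0 < \<mu>" "0 < \<tau>" "0 < \<pi>" "0 < \<omega>" "0 < M" "0 < L"
  shows "- ln (\<mu> * \<pi> * \<omega> * min (M * (\<mu> / \<tau> * \<pi>) * min (L * \<omega>) 1 / 2) 1 / 288)
       = ln 288 - ln \<mu> - ln \<pi> - ln \<omega> + pos_part (ln 2 - ln M - ln \<mu> + ln \<tau> - ln \<pi> + pos_part (- ln L - ln \<omega>))"
proof -
  define X where "X = M * (\<mu> / \<tau> * \<pi>) * min (L * \<omega>) 1 / 2"
  have X: "0 < X" unfolding X_def using assms by simp
  have "- ln X = ln 2 - ln M - ln \<mu> + ln \<tau> - ln \<pi> + pos_part (- ln L - ln \<omega>)"
    using assms neg_ln_min_one[of "L * \<omega>"] unfolding X_def by (simp add: ln_mult ln_div min_def)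
  moreover have "- ln (\<mu> * \<pi> * \<omega> * min X 1 / 288) = ln 288 - ln \<mu> - ln \<pi> - ln \<omega> - ln (min X 1)"
    using assms X by (simp add: ln_mult ln_div min_def)
  ultimately show ?thesis using neg_ln_min_one[OF X] unfolding X_def by simp
qed

lemma exp_size_ge:
  assumes "4 \<le> exp (real n * R)"
  shows "2 \<le> exp_size n R" and "real n * R - ln 2 \<le> ln (real (exp_size n R - 1))"
proof -
  define E where "E = exp (real n * R)"
  have E: "E - 1 < real (exp_size n R)" "4 \<le> E"
    unfolding exp_size_def E_def[symmetric] using assms unfolding E_def by linarith+
  thus "2 \<le> exp_size n R" by linarith
  hence "E / 2 \<le> real (exp_size n R - 1)" using E by (simp add: of_nat_diff)
  hence "ln (E / 2) \<le> ln (real (exp_size n R - 1))" using E by (subst ln_le_cancel_iff) auto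
  thus "real n * R - ln 2 \<le> ln (real (exp_size n R - 1))" unfolding E_def by (simp add: ln_div)
qed

lemma eventually_exp_ge_4:
  assumes "0 < R"
  shows "\<forall>\<^sub>F n in sequentially. 4 \<le> exp (real n * R)"
proof -
  have "filterlim (\<lambda>n. real n * R) at_top sequentially"
    using filterlim_tendsto_pos_mult_at_top[OF tendsto_const assms filterlim_real_sequentially]
    by (simp add: mult.commute)
  hence "filterlim (\<lambda>n. exp (real n * R)) at_top sequentially"
    by (rule filterlim_compose[OF exp_at_top])
  thus ?thesis by (simp add: filterlim_at_top)
qed

text \<open>At \<open>e = 0\<close> and \<open>Q \<in> joint_dists P W\<close> this is \<open>D(TV\<parallel>PW) + |A - R + |B - K|\<^sup>+|\<^sup>+\<close>
  (see \<open>exponent_bound_zero\<close>); the slack \<open>e\<close> absorbs the polynomial factors of the type counting.\<close>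

definition exponent_bound ::
    "('x \<Rightarrow> real) \<Rightarrow> ('x \<Rightarrow> 'y \<Rightarrow> real) \<Rightarrow> real \<Rightarrow> real \<Rightarrow> ('y::finite \<times> 'x::finite \<Rightarrow> real) \<Rightarrow> real \<Rightarrow> real" where
  "exponent_bound P W R K Q e =
     e + neg_entropy Q - (\<Sum>p\<in>UNIV. Q p * ln (P (snd p))) - (\<Sum>p\<in>UNIV. Q p * ln (W (snd p) (fst p)))
     + pos_part (e - R + neg_entropy Q - neg_entropy (marg Q) - (\<Sum>p\<in>UNIV. Q p * ln (P (snd p)))
                 + pos_part (e - K - (\<Sum>p\<in>UNIV. Q p * ln (W (snd p) (fst p)))))"

lemma (in code_ensemble) neg_ln_avg_error_le_type:
  fixes k :: "('y \<times> 'x) multiset"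
  assumes "size k = n" and supp: "\<And>p. p \<in># k \<Longrightarrow> 0 < P (snd p) \<and> 0 < W (snd p) (fst p)"
    and M: "2 \<le> exp_size n R" and L: "1 \<le> exp_size n K"
  defines "\<mu> \<equiv> real (card (permutations_of_multiset k))"
    and "\<tau> \<equiv> real (card (permutations_of_multiset (image_mset fst k)))"
    and "\<pi> \<equiv> prod_mset (image_mset (\<lambda>p. P (snd p)) k)"
    and "\<omega> \<equiv> prod_mset (image_mset (\<lambda>p. W (snd p) (fst p)) k)"
  shows "- ln (avg_error P W R K n) \<le> ln 288 - ln \<mu> - ln \<pi> - ln \<omega>
           + pos_part (ln 2 - ln (real (exp_size n R - 1)) - ln \<mu> + ln \<tau> - ln \<pi>
                       + pos_part (- ln (real (exp_size n K)) - ln \<omega>))"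
proof -
  define B where "B = \<mu> * \<pi> * \<omega> * min (real (exp_size n R - 1) * (\<mu> / \<tau> * \<pi>) * min (real (exp_size n K) * \<omega>) 1 / 2) 1 / 288"
  have pos: "0 < \<mu>" "0 < \<tau>" "0 < \<pi>" "0 < \<omega>"
    unfolding \<mu>_def \<tau>_def \<pi>_def \<omega>_def using supp
    by (auto simp: card_permutations_of_multiset_pos intro!: prod_mset_pos)
  have "B \<le> avg_error P W R K n"
    unfolding B_def \<mu>_def \<tau>_def \<pi>_def \<omega>_def using assms(1) supp M L by (intro avg_error_ge_joint_type) auto
  moreover have "0 < B" unfolding B_def using pos M L by simp
  ultimately have "- ln (avg_error P W R K n) \<le> - ln B" by simp
  also have "- ln B = ln 288 - ln \<mu> - ln \<pi> - ln \<omega>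
           + pos_part (ln 2 - ln (real (exp_size n R - 1)) - ln \<mu> + ln \<tau> - ln \<pi>
                       + pos_part (- ln (real (exp_size n K)) - ln \<omega>))"
    unfolding B_def using pos M L by (intro neg_ln_type_bound) auto
  finally show ?thesis .
qed

lemma ln_joint_type_estimates:
  fixes k :: "('y::finite \<times> 'x::finite) multiset" and P :: "'x \<Rightarrow> real" and W :: "'x \<Rightarrow> 'y \<Rightarrow> real"
  assumes k: "size k = n" and n: "0 < n" and supp: "\<And>p. p \<in># k \<Longrightarrow> 0 < P (snd p) \<and> 0 < W (snd p) (fst p)"
  defines "Q \<equiv> \<lambda>p. real (count k p) / real n"
  shows "- ln (real (card (permutations_of_multiset k)))
           \<le> real n * neg_entropy Q + real CARD('y \<times> 'x) * (1 + ln (real n + 1))"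
    and "ln (real (card (permutations_of_multiset (image_mset fst k))))
           \<le> - real n * neg_entropy (marg Q) + (1 + ln (real n + 1))"
    and "ln (prod_mset (image_mset (\<lambda>p. P (snd p)) k)) = real n * (\<Sum>p\<in>UNIV. Q p * ln (P (snd p)))"
    and "ln (prod_mset (image_mset (\<lambda>p. W (snd p) (fst p)) k)) = real n * (\<Sum>p\<in>UNIV. Q p * ln (W (snd p) (fst p)))"
proof -
  show "- ln (real (card (permutations_of_multiset k)))
           \<le> real n * neg_entropy Q + real CARD('y \<times> 'x) * (1 + ln (real n + 1))"
    using ln_card_permutations_of_multiset_bounds(1)[of k] n unfolding k Q_def by simp
  have "(\<lambda>y. real (count (image_mset fst k) y) / real n) = marg Q"
    unfolding marg_def Q_def by (simp add: fun_eq_iff count_image_fst sum_divide_distrib)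
  thus "ln (real (card (permutations_of_multiset (image_mset fst k))))
           \<le> - real n * neg_entropy (marg Q) + (1 + ln (real n + 1))"
    using ln_card_permutations_of_multiset_bounds(2)[of "image_mset fst k"] n k by simp
  show "ln (prod_mset (image_mset (\<lambda>p. P (snd p)) k)) = real n * (\<Sum>p\<in>UNIV. Q p * ln (P (snd p)))"
    and "ln (prod_mset (image_mset (\<lambda>p. W (snd p) (fst p)) k)) = real n * (\<Sum>p\<in>UNIV. Q p * ln (W (snd p) (fst p)))"
    unfolding Q_def using n supp by (simp_all add: ln_prod_mset_image sum_distrib_left)
qed

lemma (in code_ensemble) neg_ln_avg_error_le:
  fixes k :: "('y \<times> 'x) multiset"
  assumes k: "size k = n" and n: "0 < n" and supp: "\<And>p. p \<in># k \<Longrightarrow> 0 < P (snd p) \<and> 0 < W (snd p) (fst p)"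
    and eR: "4 \<le> exp (real n * R)" and eK: "4 \<le> exp (real n * K)"
  shows "- ln (avg_error P W R K n) / real n
         \<le> exponent_bound P W R K (\<lambda>p. real (count k p) / real n)
              ((ln 288 + (real CARD('y \<times> 'x) + 1) * (1 + ln (real n + 1))) / real n)"
proof -
  define Q where "Q p = real (count k p) / real n" for p
  define l where "l = 1 + ln (real n + 1)"
  define E where "E = ln 288 + real CARD('y \<times> 'x) * l + l"
  define LP LW where "LP = (\<Sum>p\<in>UNIV. Q p * ln (P (snd p)))" and "LW = (\<Sum>p\<in>UNIV. Q p * ln (W (snd p) (fst p)))"
  define \<mu> \<tau> where "\<mu> = real (card (permutations_of_multiset k))"
    and "\<tau> = real (card (permutations_of_multiset (image_mset fst k)))"
  define \<pi> \<omega> where "\<pi> = prod_mset (image_mset (\<lambda>p. P (snd p)) k)"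
    and "\<omega> = prod_mset (image_mset (\<lambda>p. W (snd p) (fst p)) k)"
  have M: "2 \<le> exp_size n R" "real n * R - ln 2 \<le> ln (real (exp_size n R - 1))"
    using exp_size_ge[OF eR] by auto
  have L: "1 \<le> exp_size n K" "real n * K - ln 2 \<le> ln (real (exp_size n K))"
    using exp_size_ge[OF eK] by (auto intro: order.trans[OF _ ln_mono] simp: of_nat_diff)
  have "- ln \<mu> \<le> real n * neg_entropy Q + real CARD('y \<times> 'x) * l"
    and "ln \<tau> \<le> - real n * neg_entropy (marg Q) + l" and "ln \<pi> = real n * LP" and "ln \<omega> = real n * LW"
    unfolding \<mu>_def \<tau>_def \<pi>_def \<omega>_def LP_def LW_def l_def Q_def
    using ln_joint_type_estimates[OF k n, of P W] supp by simp_all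
  moreover have "0 \<le> l" "0 \<le> real CARD('y \<times> 'x) * l" "0 \<le> ln (2 :: real)" unfolding l_def by simp_all
  moreover have "2 * ln 2 \<le> ln (288 :: real)"
  proof -
    have "2 * ln 2 = ln (4 :: real)" using ln_realpow[of "2::real" 2] by simp
    thus ?thesis by simp
  qed
  moreover note M L
  moreover have "- ln (avg_error P W R K n) \<le> ln 288 - ln \<mu> - ln \<pi> - ln \<omega>
           + pos_part (ln 2 - ln (real (exp_size n R - 1)) - ln \<mu> + ln \<tau> - ln \<pi>
                       + pos_part (- ln (real (exp_size n K)) - ln \<omega>))"
    unfolding \<mu>_def \<tau>_def \<pi>_def \<omega>_def
    by (rule neg_ln_avg_error_le_type[OF k _ M(1) L(1)]) (use supp in blast)
  ultimately have "- ln (avg_error P W R K n)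
      \<le> (E + real n * neg_entropy Q - real n * LP - real n * LW)
         + pos_part ((E - real n * R + real n * neg_entropy Q - real n * neg_entropy (marg Q) - real n * LP)
                     + pos_part (E - real n * K - real n * LW))"
    unfolding E_def by (elim order.trans) (intro add_mono pos_part_mono; linarith)
  also have "\<dots> = real n * exponent_bound P W R K Q (E / real n)"
    unfolding exponent_bound_def LP_def LW_def using n
    by (simp only: mult_nested_pos_part of_nat_0_le_iff) (simp add: algebra_simps)
  finally have "- ln (avg_error P W R K n) / real n \<le> exponent_bound P W R K Q (E / real n)"
    using n by (subst pos_divide_le_eq) (simp_all add: mult.commute)
  moreover have "E = ln 288 + (real CARD('y \<times> 'x) + 1) * (1 + ln (real n + 1))"
    unfolding E_def l_def by (simp add: algebra_simps)
  ultimately show ?thesis unfolding Q_def by simp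
qed

section \<open>Approximating a joint distribution by types\<close>

lemma continuous_on_xlnx: "continuous_on {0..} (\<lambda>x::real. x * ln x)"
  unfolding continuous_on_def
proof
  fix x :: real assume x: "x \<in> {0..}"
  show "((\<lambda>x. x * ln x) \<longlongrightarrow> x * ln x) (at x within {0..})"
  proof (cases "x = 0")
    case True
    have "at (0::real) within {0..} = at 0 within {0<..}"
      by (rule at_within_nhd[of _ UNIV]) auto
    moreover have "((\<lambda>x::real. x * ln x) \<longlongrightarrow> 0) (at_right 0)" by real_asymp
    ultimately show ?thesis using True by simp
  next
    case False
    hence "isCont (\<lambda>x. x * ln x) x" using x by (intro continuous_intros) auto
    thus ?thesis by (simp add: isCont_def tendsto_within_subset[OF _ subset_UNIV])
  qed
qed

lemma tendsto_xlnx: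
  fixes f :: "'a \<Rightarrow> real"
  assumes "(f \<longlongrightarrow> l) F" and "\<And>n. 0 \<le> f n" and "0 \<le> l"
  shows "((\<lambda>n. f n * ln (f n)) \<longlongrightarrow> l * ln l) F"
  using continuous_on_tendsto_compose[OF continuous_on_xlnx assms(1)] assms(2,3) by simp

lemma tendsto_nat_floor_div:
  assumes "0 \<le> q"
  shows "(\<lambda>n. real (nat \<lfloor>real n * q\<rfloor>) / real n) \<longlonglongrightarrow> q"
proof (rule tendsto_sandwich[where f = "\<lambda>n. q - 1 / real n" and h = "\<lambda>n. q"])
  show "\<forall>\<^sub>F n in sequentially. q - 1 / real n \<le> real (nat \<lfloor>real n * q\<rfloor>) / real n"
    using eventually_gt_at_top[of 0]
  proof eventually_elim
    case (elim n)
    have "real n * q - 1 \<le> real (nat \<lfloor>real n * q\<rfloor>)" using nat_floor_bounds(1)[of "real n * q"] assms by simp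
    hence "(real n * q - 1) / real n \<le> real (nat \<lfloor>real n * q\<rfloor>) / real n" by (rule divide_right_mono) simp
    moreover have "q - 1 / real n = (real n * q - 1) / real n" using elim by (simp add: field_simps)
    ultimately show ?case by simp
  qed
  show "\<forall>\<^sub>F n in sequentially. real (nat \<lfloor>real n * q\<rfloor>) / real n \<le> q"
    using eventually_gt_at_top[of 0]
  proof eventually_elim
    case (elim n)
    have "real (nat \<lfloor>real n * q\<rfloor>) \<le> real n * q" using nat_floor_bounds(2)[of "real n * q"] assms by simp
    thus ?case using elim by (simp add: field_simps)
  qed
qed (real_asymp, simp)

lemma sum_nat_floor_mult_le:
  fixes Q :: "'p \<Rightarrow> real"
  assumes "finite A" and "\<And>p. 0 \<le> Q p" and "sum Q A \<le> 1"
  shows "(\<Sum>p\<in>A. nat \<lfloor>real n * Q p\<rfloor>) \<le> n"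
proof -
  have "real (\<Sum>p\<in>A. nat \<lfloor>real n * Q p\<rfloor>) \<le> (\<Sum>p\<in>A. real n * Q p)"
    unfolding of_nat_sum using assms(2) nat_floor_bounds(2) by (intro sum_mono) simp
  also have "\<dots> \<le> real n" using assms(3) by (simp add: sum_distrib_left[symmetric] mult_left_le)
  finally show ?thesis by linarith
qed

text \<open>All coordinates but one are rounded down; the remaining mass goes to a coordinate \<open>p0\<close> of
  positive probability.\<close>

lemma exists_counts_tendsto:
  fixes Q :: "'p::finite \<Rightarrow> real"
  assumes Q0: "\<And>p. 0 \<le> Q p" and Q1: "(\<Sum>p\<in>UNIV. Q p) = 1"
  obtains c :: "nat \<Rightarrow> 'p \<Rightarrow> nat"
  where "\<And>n. (\<Sum>p\<in>UNIV. c n p) = n" and "\<And>n p. 0 < c n p \<Longrightarrow> 0 < Q p"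
    and "\<And>p. (\<lambda>n. real (c n p) / real n) \<longlonglongrightarrow> Q p"
proof -
  obtain p0 where p0: "0 < Q p0"
    using Q1 Q0 by (metis (mono_tags) less_eq_real_def sum.neutral zero_neq_one)
  define d where "d n p = nat \<lfloor>real n * Q p\<rfloor>" for n p
  have d_conv: "(\<lambda>n. real (d n p) / real n) \<longlonglongrightarrow> Q p" for p
    unfolding d_def using tendsto_nat_floor_div Q0 by simp
  have d_le: "(\<Sum>p\<in>UNIV-{p0}. d n p) \<le> n" for n
    unfolding d_def using Q0 Q1 p0 by (intro sum_nat_floor_mult_le) (simp_all add: sum_diff1)
  define c where "c n p = (if p = p0 then n - (\<Sum>p'\<in>UNIV-{p0}. d n p') else d n p)" for n p
  show ?thesis
  proof
    show "(\<Sum>p\<in>UNIV. c n p) = n" for n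
      using d_le[of n] by (simp add: sum.remove[of UNIV p0] c_def)
    show "0 < Q p" if "0 < c n p" for n p
    proof (cases "p = p0")
      case False
      hence "0 < nat \<lfloor>real n * Q p\<rfloor>" using that by (simp add: c_def d_def)
      hence "0 < real n * Q p" by linarith
      thus ?thesis using Q0[of p] by (simp add: zero_less_mult_iff)
    qed (use p0 in simp)
    show "(\<lambda>n. real (c n p) / real n) \<longlonglongrightarrow> Q p" for p
    proof (cases "p = p0")
      case True
      have "(\<lambda>n. 1 - (\<Sum>p'\<in>UNIV-{p0}. real (d n p') / real n)) \<longlonglongrightarrow> 1 - (\<Sum>p'\<in>UNIV-{p0}. Q p')"
        by (intro tendsto_intros d_conv)
      moreover have "1 - (\<Sum>p'\<in>UNIV-{p0}. Q p') = Q p0" using Q1 by (simp add: sum_diff1)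
      moreover have "\<forall>\<^sub>F n in sequentially. 1 - (\<Sum>p'\<in>UNIV-{p0}. real (d n p') / real n) = real (c n p0) / real n"
        using eventually_gt_at_top[of 0]
      proof eventually_elim
        case (elim n)
        thus ?case using d_le[of n]
          by (simp add: c_def of_nat_diff field_simps sum_divide_distrib[symmetric])
      qed
      ultimately show ?thesis using True by (simp add: Lim_transform_eventually)
    qed (simp add: c_def d_conv)
  qed
qed

lemma exists_type_seq:
  fixes Q :: "'p::finite \<Rightarrow> real"
  assumes "\<And>p. 0 \<le> Q p" and "(\<Sum>p\<in>UNIV. Q p) = 1"
  obtains k :: "nat \<Rightarrow> 'p multiset"
  where "\<And>n. size (k n) = n" and "\<And>n p. p \<in># k n \<Longrightarrow> 0 < Q p"
    and "\<And>p. (\<lambda>n. real (count (k n) p) / real n) \<longlonglongrightarrow> Q p"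
proof -
  obtain c where c: "\<And>n. (\<Sum>p\<in>UNIV. c n p) = n" "\<And>n p. 0 < c n p \<Longrightarrow> 0 < Q p"
    "\<And>p. (\<lambda>n. real (c n p) / real n) \<longlonglongrightarrow> Q p"
    using exists_counts_tendsto[OF assms] by blast
  define k where "k n = (\<Sum>p\<in>UNIV. replicate_mset (c n p) p)" for n
  have count_k: "count (k n) p = c n p" for n p unfolding k_def by (simp add: count_sum)
  show ?thesis
  proof
    show "size (k n) = n" for n using size_eq_sum_count[of "k n"] count_k c(1) by simp
    show "0 < Q p" if "p \<in># k n" for n p using that c(2) count_k by (metis count_greater_zero_iff)
  qed (use c(3) count_k in simp)
qed

lemma tendsto_neg_entropy:
  fixes f :: "'a \<Rightarrow> 'p::finite \<Rightarrow> real"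
  assumes "\<And>p. ((\<lambda>n. f n p) \<longlongrightarrow> Q p) F" and "\<And>n p. 0 \<le> f n p" and "\<And>p. 0 \<le> Q p"
  shows "((\<lambda>n. neg_entropy (f n)) \<longlongrightarrow> neg_entropy Q) F"
  unfolding neg_entropy_def using assms by (intro tendsto_sum tendsto_xlnx) auto

lemma tendsto_exponent_bound:
  assumes "\<And>p. ((\<lambda>n. f n p) \<longlongrightarrow> Q p) F" and "\<And>n p. 0 \<le> f n p" and "\<And>p. 0 \<le> Q p"
    and "(e \<longlongrightarrow> e0) F"
  shows "((\<lambda>n. exponent_bound P W R K (f n) (e n)) \<longlongrightarrow> exponent_bound P W R K Q e0) F"
proof -
  have "((\<lambda>n. marg (f n) y) \<longlongrightarrow> marg Q y) F" for y
    unfolding marg_def by (intro tendsto_sum assms)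
  hence "((\<lambda>n. neg_entropy (marg (f n))) \<longlongrightarrow> neg_entropy (marg Q)) F"
    using assms(2,3) by (intro tendsto_neg_entropy) (auto simp: marg_def intro: sum_nonneg)
  moreover have "((\<lambda>n. neg_entropy (f n)) \<longlongrightarrow> neg_entropy Q) F"
    using assms(1-3) by (rule tendsto_neg_entropy)
  ultimately show ?thesis
    unfolding exponent_bound_def pos_part_def by (intro tendsto_intros assms(1,4))
qed

lemma joint_dists_pos:
  assumes "\<And>x. 0 \<le> P x" and "\<And>x y. 0 \<le> W x y" and "Q \<in> joint_dists P W" and "0 < Q (y, x)"
  shows "0 < P x" and "0 < W x y"
proof -
  have "0 < P x * W x y" using assms(3,4) unfolding joint_dists_def by auto
  thus "0 < P x" "0 < W x y" using assms(1,2)[of x] assms(2)[of x y]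
    by (auto simp: zero_less_mult_iff order_less_le)
qed

lemma divg_eq:
  fixes P :: "'x::finite \<Rightarrow> real" and W :: "'x \<Rightarrow> 'y::finite \<Rightarrow> real"
  assumes "\<And>x. 0 \<le> P x" and "\<And>x y. 0 \<le> W x y" and Q: "Q \<in> joint_dists P W"
  shows "divg P W Q = neg_entropy Q - (\<Sum>p\<in>UNIV. Q p * ln (P (snd p))) - (\<Sum>p\<in>UNIV. Q p * ln (W (snd p) (fst p)))"
proof -
  have "Q (y, x) * ln (Q (y, x) / (P x * W x y))
      = Q (y, x) * ln (Q (y, x)) - Q (y, x) * ln (P x) - Q (y, x) * ln (W x y)" for y x
  proof (cases "Q (y, x) = 0")
    case False
    hence "0 < Q (y, x)" using Q unfolding joint_dists_def by (auto simp: order_less_le)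
    with joint_dists_pos[OF assms this] show ?thesis by (simp add: ln_div ln_mult algebra_simps)
  qed simp
  thus ?thesis unfolding divg_def neg_entropy_def
    by (simp add: case_prod_beta' sum_subtractf[symmetric])
qed

lemma A_TV_eq:
  fixes P :: "'x::finite \<Rightarrow> real" and W :: "'x \<Rightarrow> 'y::finite \<Rightarrow> real"
  assumes "\<And>x. 0 \<le> P x" and "\<And>x y. 0 \<le> W x y" and Q: "Q \<in> joint_dists P W"
  shows "A_TV P Q = neg_entropy Q - neg_entropy (marg Q) - (\<Sum>p\<in>UNIV. Q p * ln (P (snd p)))"
proof -
  have "Q (y, x) * ln (condV Q y x / P x)
      = Q (y, x) * ln (Q (y, x)) - Q (y, x) * ln (marg Q y) - Q (y, x) * ln (P x)" for y x
  proof (cases "Q (y, x) = 0")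
    case False
    hence q: "0 < Q (y, x)" using Q unfolding joint_dists_def by (auto simp: order_less_le)
    moreover have "Q (y, x) \<le> marg Q y"
      unfolding marg_def using Q by (intro member_le_sum) (auto simp: joint_dists_def)
    ultimately have "0 < marg Q y" by linarith
    with q joint_dists_pos[OF assms q] show ?thesis
      by (simp add: condV_def ln_div ln_mult algebra_simps)
  qed simp
  moreover have "(\<Sum>p\<in>UNIV. Q p * ln (marg Q (fst p))) = (\<Sum>y\<in>UNIV. \<Sum>x\<in>UNIV. Q (y, x) * ln (marg Q y))"
    by (simp add: sum.cartesian_product case_prod_beta')
  hence "(\<Sum>p\<in>UNIV. Q p * ln (marg Q (fst p))) = neg_entropy (marg Q)"
    unfolding neg_entropy_def by (simp add: sum_distrib_right[symmetric] marg_def[symmetric])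
  ultimately show ?thesis unfolding A_TV_def neg_entropy_def
    by (simp add: case_prod_beta' sum_subtractf)
qed

lemma B_TV_eq: "B_TV W Q = - (\<Sum>p\<in>UNIV. Q p * ln (W (snd p) (fst p)))"
  unfolding B_TV_def by (simp add: case_prod_beta' sum_negf[symmetric])

lemma exponent_bound_zero:
  assumes "\<And>x. 0 \<le> P x" and "\<And>x y. 0 \<le> W x y" and "Q \<in> joint_dists P W"
  shows "exponent_bound P W R K Q 0 = divg P W Q + pos_part (A_TV P Q - R + pos_part (B_TV W Q - K))"
proof -
  have "divg P W Q = 0 + neg_entropy Q - (\<Sum>p\<in>UNIV. Q p * ln (P (snd p))) - (\<Sum>p\<in>UNIV. Q p * ln (W (snd p) (fst p)))"
    and "A_TV P Q - R = 0 - R + neg_entropy Q - neg_entropy (marg Q) - (\<Sum>p\<in>UNIV. Q p * ln (P (snd p)))"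
    and "B_TV W Q - K = 0 - K - (\<Sum>p\<in>UNIV. Q p * ln (W (snd p) (fst p)))"
    by (simp_all add: divg_eq[OF assms] A_TV_eq[OF assms] B_TV_eq)
  thus ?thesis unfolding exponent_bound_def by (simp only:)
qed

context code_ensemble
begin

lemma PW_in_joint_dists: "(\<lambda>(y, x). P x * W x y) \<in> joint_dists P W"
proof -
  have "(\<Sum>p\<in>UNIV. case p of (y, x) \<Rightarrow> P x * W x y) = (\<Sum>y\<in>UNIV. \<Sum>x\<in>UNIV. P x * W x y)"
    by (simp add: sum.cartesian_product)
  also have "\<dots> = (\<Sum>x\<in>UNIV. P x * (\<Sum>y\<in>UNIV. W x y))"
    by (subst sum.swap) (simp add: sum_distrib_left)
  finally show ?thesis by (auto simp: joint_dists_def sum_W sum_P P_nonneg W_nonneg)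
qed

lemma limsup_le_exponent:
  assumes R: "0 < R" and K: "0 < K" and Q: "Q \<in> joint_dists P W"
  shows "limsup (\<lambda>n. ereal (- ln (avg_error P W R K n) / real n))
           \<le> ereal (divg P W Q + pos_part (A_TV P Q - R + pos_part (B_TV W Q - K)))"
proof -
  have Q0: "\<And>p. 0 \<le> Q p" and Q1: "(\<Sum>p\<in>UNIV. Q p) = 1" using Q unfolding joint_dists_def by auto
  obtain k where size_k: "\<And>n. size (k n) = n" and k_pos: "\<And>n p. p \<in># k n \<Longrightarrow> 0 < Q p"
    and k_conv: "\<And>p. (\<lambda>n. real (count (k n) p) / real n) \<longlonglongrightarrow> Q p"
    using exists_type_seq[OF Q0 Q1] by blast
  define e where "e n = (ln 288 + (real CARD('y \<times> 'x) + 1) * (1 + ln (real n + 1))) / real n" for n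
  define U where "U n = exponent_bound P W R K (\<lambda>p. real (count (k n) p) / real n) (e n)" for n
  have "\<forall>\<^sub>F n in sequentially. ereal (- ln (avg_error P W R K n) / real n) \<le> ereal (U n)"
    using eventually_exp_ge_4[OF R] eventually_exp_ge_4[OF K] eventually_gt_at_top[of 0]
  proof eventually_elim
    case (elim n)
    have "0 < P (snd p) \<and> 0 < W (snd p) (fst p)" if "p \<in># k n" for p
      using joint_dists_pos[OF P_nonneg W_nonneg Q, of "fst p" "snd p"] k_pos[OF that] by simp
    thus ?case unfolding U_def e_def using neg_ln_avg_error_le[OF size_k elim(3)] elim(1,2) by simp
  qed
  hence "limsup (\<lambda>n. ereal (- ln (avg_error P W R K n) / real n)) \<le> limsup (\<lambda>n. ereal (U n))"
    by (rule Limsup_mono)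
  moreover have "U \<longlonglongrightarrow> exponent_bound P W R K Q 0"
    unfolding U_def e_def using Q0 by (intro tendsto_exponent_bound k_conv) (simp_all, real_asymp)
  hence "limsup (\<lambda>n. ereal (U n)) = ereal (exponent_bound P W R K Q 0)"
    by (intro lim_imp_Limsup tendsto_ereal) simp_all
  ultimately show ?thesis using exponent_bound_zero[OF P_nonneg W_nonneg Q] by simp
qed

end

theorem lemma5:
  fixes P :: "'x::finite \<Rightarrow> real" and W :: "'x \<Rightarrow> 'y::finite \<Rightarrow> real"
    and R K :: real
  assumes "\<forall>x. 0 \<le> P x" and "(\<Sum>x\<in>UNIV. P x) = 1"
    and "\<forall>x y. 0 \<le> W x y" and "\<forall>x. (\<Sum>y\<in>UNIV. W x y) = 1"
    and "R > 0" and "K > 0"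
  shows "limsup (\<lambda>n. ereal (- ln (avg_error P W R K n) / real n)) \<le> ereal (E_e P W R K)"
proof -
  interpret code_ensemble P W using assms(1-4) by unfold_locales auto
  define f where "f Q = divg P W Q + pos_part (A_TV P Q - R + pos_part (B_TV W Q - K))" for Q
  define l where "l = limsup (\<lambda>n. ereal (- ln (avg_error P W R K n) / real n))"
  have bound: "l \<le> ereal (f Q)" if "Q \<in> joint_dists P W" for Q
    unfolding l_def f_def using limsup_le_exponent[OF assms(5,6) that] .
  have nonempty: "f ` joint_dists P W \<noteq> {}" using PW_in_joint_dists by blast
  show ?thesis
  proof (cases l)
    case (real r)
    hence "r \<le> Inf (f ` joint_dists P W)" using bound nonempty by (intro cInf_greatest) auto
    thus ?thesis using real unfolding l_def E_e_def f_def by simp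
  qed (use bound nonempty l_def in auto)
qed

end
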